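(* The bijections $\psi:\mathrm{revSSYT}\to\mathrm{qKT}^{(1)}$ and $\Gamma:\mathrm{revSSYT}\to\mathcal{A}\mathrm{SSF}$ restrict to bijections $\mathrm{HrevSSYT}\to\mathrm{HqKT}^{(1)}$ and $\mathrm{HrevSSYT}\to\mathrm{HSSF}$ respectively.
   Context: $\mathrm{revSSYT}$: reverse semistandard Young tableaux of all partition shapes (English notation; positive integer entries; rows weakly decrease left to right, columns strictly decrease top to bottom). For a weak composition $a$, $D(a)$ has $a_i$ left-justified boxes in row $i$, row 1 lowest. Quasi-key tableau of shape $a$: filling of $D(a)$ with positive integers such that (1) rows weakly decrease and no entry of row $i$ exceeds $i$; (2) column entries distinct, increasing going up the first column; (3) if $i$ is above $k$ in a column with $i<k$, there is an entry $j>i$ immediately right of $k$; (4) for two rows with the higher strictly longer, an entry $i$ in column $c$ of the lower and $j$ in column $c+1$ of the higher satisfy $i<j$. $\mathrm{qKT}^{(1)}$: all quasi-key tableaux (all shapes) with first-column entries equal to row indices. Triples of $D(a)$ (rows $r<s$): Type A: $\gamma=(r,c),\alpha=(r,c+1),\beta=(s,c+1)$, $a_r\ge a_s$; Type B: $\gamma=(s,c),\alpha=(s,c+1),\beta=(r,c)$, $a_s>a_r$; inversion triple: $\beta>\gamma\ge\alpha$ or $\gamma\ge\alpha>\beta$. $\mathcal{A}\mathrm{SSF}$: all fillings of skyline diagrams $D(a)$ (all $a$) with positive integers, rows weakly decreasing, distinct column entries, all triples inversion triples, first-column entry of each nonempty row $i$ equal to $i$. $\psi$ (right row-filling): with column sets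 $C_1,C_2,\ldots$ of $V$, repeatedly let $k$ be the largest index with $C_k\neq\emptyset$, choose the smallest $y_k\in C_k$, then for $c=k-1,\ldots,1$ the smallest $y_c\in C_c$ with $y_c\ge y_{c+1}$; make $(y_1,\ldots,y_k)$ row $y_1$ of the output and delete these elements; it is known to be a bijection onto $\mathrm{qKT}^{(1)}$. $\Gamma$ (column-filling): column 1 of $\Gamma(V)$ places each entry $i$ of column 1 of $V$ in row $i$; given column $c$, the entries of column $c+1$ of $V$ are placed in decreasing order, each in the lowest row that has an entry in column $c$ weakly larger than it and an unfilled position in column $c+1$; it is known to be a bijection $\mathrm{revSSYT}\to\mathcal{A}\mathrm{SSF}$. A filling $X$ (in any of these three sets) is particle-highest if for every entry value $i$ of $X$, the leftmost occurrence of $i$ is in the first column of $X$ or lies in a column weakly left of some occurrence of $j$, where $j$ is the smallest entry of $X$ larger than $i$. $\mathrm{HrevSSYT}$, $\mathrm{HqKT}^{(1)}$, $\mathrm{HSSF}$ denote the particle-highest elements of $\mathrm{revSSYT}$, $\mathrm{qKT}^{(1)}$, $\mathcal{A}\mathrm{SSF}$. *)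

theory Defs
  imports Main
begin

text \<open>A tableau V is a list of rows, top row first (English notation);
  row r (0-indexed in the list) is a list of its entries from left to right.\<close>

definition revSSYT :: "nat list list set" where
  "revSSYT = {V.
     (\<forall>row\<in>set V. row \<noteq> [] \<and> (\<forall>x\<in>set row. 0 < x) \<and> sorted_wrt (\<lambda>a b. b \<le> a) row) \<and>
     sorted_wrt (\<lambda>a b. b \<le> a) (map length V) \<and>
     (\<forall>r j. Suc r < length V \<and> j < length (V ! Suc r) \<longrightarrow> V ! Suc r ! j < V ! r ! j)}"

text \<open>Column c (1-indexed) of a tableau, read top to bottom.\<close>
definition colV :: "nat list list \<Rightarrow> nat \<Rightarrow> nat list" where
  "colV V c = [V ! r ! (c - 1). r \<leftarrow> [0..<length V], c \<le> length (V ! r)]"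

definition colset :: "nat list list \<Rightarrow> nat \<Rightarrow> nat set" where
  "colset V c = set (colV V c)"

definition width :: "nat list list \<Rightarrow> nat" where
  "width V = (if V = [] then 0 else length (hd V))"

text \<open>A filling F of a skyline diagram D(a) is a list of rows, row 1 (the lowest)
  first: F ! (i-1) is row i read left to right, and a_i = length (F ! (i-1)).
  Different weak compositions differing only by trailing zeros are identified by
  requiring the last listed row to be nonempty.\<close>

definition slen :: "nat list list \<Rightarrow> nat \<Rightarrow> nat" where
  "slen F i = (if 1 \<le> i \<and> i \<le> length F then length (F ! (i - 1)) else 0)"

definition incell :: "nat list list \<Rightarrow> nat \<Rightarrow> nat \<Rightarrow> bool" where
  "incell F i c \<longleftrightarrow> 1 \<le> c \<and> c \<le> slen F i"

definition ent :: "nat list list \<Rightarrow> nat \<Rightarrow> nat \<Rightarrow> nat" where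
  "ent F i c = F ! (i - 1) ! (c - 1)"

definition skyline_ok :: "nat list list \<Rightarrow> bool" where
  "skyline_ok F \<longleftrightarrow> F = [] \<or> last F \<noteq> []"

definition qKT1 :: "nat list list set" where
  "qKT1 = {F. skyline_ok F \<and>
     \<comment> \<open>(1) positive entries, rows weakly decrease, entries of row i at most i\<close>
     (\<forall>i c. incell F i c \<longrightarrow> 0 < ent F i c \<and> ent F i c \<le> i) \<and>
     (\<forall>i c. 1 \<le> c \<and> incell F i (c + 1) \<longrightarrow> ent F i (c + 1) \<le> ent F i c) \<and>
     \<comment> \<open>(2) distinct column entries, first column increasing upwards\<close>
     (\<forall>i i' c. incell F i c \<and> incell F i' c \<and> i \<noteq> i' \<longrightarrow> ent F i c \<noteq> ent F i' c) \<and>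
     (\<forall>i i'. incell F i 1 \<and> incell F i' 1 \<and> i < i' \<longrightarrow> ent F i 1 < ent F i' 1) \<and>
     \<comment> \<open>(3) entry at (s,c) above entry at (r,c), r < s, smaller: needs larger entry right of lower one\<close>
     (\<forall>r s c. r < s \<and> incell F r c \<and> incell F s c \<and> ent F s c < ent F r c \<longrightarrow>
        incell F r (c + 1) \<and> ent F s c < ent F r (c + 1)) \<and>
     \<comment> \<open>(4) higher row strictly longer\<close>
     (\<forall>r s c. r < s \<and> slen F r < slen F s \<and> incell F r c \<and> incell F s (c + 1) \<longrightarrow>
        ent F r c < ent F s (c + 1)) \<and>
     \<comment> \<open>first-column entries equal row indices\<close>
     (\<forall>i. incell F i 1 \<longrightarrow> ent F i 1 = i)}"

definition inversion_triple :: "nat \<Rightarrow> nat \<Rightarrow> nat \<Rightarrow> bool" where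
  "inversion_triple \<gamma> \<alpha> \<beta> \<longleftrightarrow> (\<beta> > \<gamma> \<and> \<gamma> \<ge> \<alpha>) \<or> (\<gamma> \<ge> \<alpha> \<and> \<alpha> > \<beta>)"

definition ASSF :: "nat list list set" where
  "ASSF = {F. skyline_ok F \<and>
     (\<forall>i c. incell F i c \<longrightarrow> 0 < ent F i c) \<and>
     (\<forall>i c. 1 \<le> c \<and> incell F i (c + 1) \<longrightarrow> ent F i (c + 1) \<le> ent F i c) \<and>
     (\<forall>i i' c. incell F i c \<and> incell F i' c \<and> i \<noteq> i' \<longrightarrow> ent F i c \<noteq> ent F i' c) \<and>
     \<comment> \<open>type A triples: gamma=(r,c), alpha=(r,c+1), beta=(s,c+1), r<s, a_r \<ge> a_s\<close>
     (\<forall>r s c. r < s \<and> 1 \<le> c \<and> slen F s \<le> slen F r \<and> incell F s (c + 1) \<longrightarrow>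
        inversion_triple (ent F r c) (ent F r (c + 1)) (ent F s (c + 1))) \<and>
     \<comment> \<open>type B triples: gamma=(s,c), alpha=(s,c+1), beta=(r,c), r<s, a_s > a_r\<close>
     (\<forall>r s c. r < s \<and> slen F r < slen F s \<and> incell F r c \<longrightarrow>
        inversion_triple (ent F s c) (ent F s (c + 1)) (ent F r c)) \<and>
     (\<forall>i. incell F i 1 \<longrightarrow> ent F i 1 = i)}"

text \<open>Occurrences (column, value) of entries of a filling (works for both
  representations: columns are positions within rows, 1-indexed).\<close>
definition occs :: "nat list list \<Rightarrow> (nat \<times> nat) set" where
  "occs X = {(c, v). \<exists>r < length X. 1 \<le> c \<and> c \<le> length (X ! r) \<and> X ! r ! (c - 1) = v}"

definition vals :: "nat list list \<Rightarrow> nat set" where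
  "vals X = snd ` occs X"

definition particle_highest :: "nat list list \<Rightarrow> bool" where
  "particle_highest X \<longleftrightarrow> (\<forall>i \<in> vals X.
     let c0 = Min {c. (c, i) \<in> occs X} in
     c0 = 1 \<or> ({v \<in> vals X. i < v} \<noteq> {} \<and>
               (\<exists>c'. (c', Min {v \<in> vals X. i < v}) \<in> occs X \<and> c0 \<le> c')))"

definition HrevSSYT :: "nat list list set" where
  "HrevSSYT = {V \<in> revSSYT. particle_highest V}"

definition HqKT1 :: "nat list list set" where
  "HqKT1 = {F \<in> qKT1. particle_highest F}"

definition HSSF :: "nat list list set" where
  "HSSF = {F \<in> ASSF. particle_highest F}"

text \<open>chain takes the nonempty column sets in reverse order C_k, ..., C_1 and a lower
  bound b, returning y_k, ..., y_1 with y_c the least element of C_c that is \<ge> y_(c+1).\<close>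
fun chain :: "nat set list \<Rightarrow> nat \<Rightarrow> nat list" where
  "chain [] b = []"
| "chain (C # Cs) b = (let y = Min {x \<in> C. b \<le> x} in y # chain Cs y)"

definition trim :: "nat set list \<Rightarrow> nat set list" where
  "trim cs = rev (dropWhile (\<lambda>C. C = {}) (rev cs))"

definition psi_step :: "nat set list \<times> (nat \<times> nat list) list \<Rightarrow> nat set list \<times> (nat \<times> nat list) list" where
  "psi_step st = (let cs = trim (fst st) in
     if cs = [] then (cs, snd st)
     else let row = rev (chain (rev cs) 0) in
       (map (\<lambda>(C, y). C - {y}) (zip cs row), (hd row, row) # snd st))"

definition sky_of_pairs :: "(nat \<times> nat list) list \<Rightarrow> nat list list" where
  "sky_of_pairs ps = map (\<lambda>i. case map_of ps i of None \<Rightarrow> [] | Some row \<Rightarrow> row)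
       [1..<Max (insert 0 (fst ` set ps)) + 1]"

definition psi :: "nat list list \<Rightarrow> nat list list" where
  "psi V = sky_of_pairs (snd ((psi_step ^^ sum_list (map length V))
             (map (colset V) [1..<width V + 1], [])))"

text \<open>Placing x into column c+1: the lowest row whose row has length exactly c
  (has an entry in column c and column c+1 still unfilled) with column-c entry \<ge> x.\<close>
definition gplace :: "nat \<Rightarrow> (nat \<Rightarrow> nat list) \<Rightarrow> nat \<Rightarrow> (nat \<Rightarrow> nat list)" where
  "gplace c g x = (let r = (LEAST r. length (g r) = c \<and> x \<le> last (g r)) in g(r := g r @ [x]))"

definition Gamma :: "nat list list \<Rightarrow> nat list list" where
  "Gamma V = (let g0 = (\<lambda>r. if r \<in> set (colV V 1) then [r] else []);
                  g = foldl (\<lambda>g c. foldl (gplace c) g (rev (sort (colV V (c + 1))))) g0 [1..<width V];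
                  R = Max (insert 0 (set (colV V 1)))
              in map g [1..<R + 1])"

end

theory Submission
  imports Defs
begin

(* All three families of fillings are governed by their column sets. A reverse SSYT, a
   quasi-key tableau in qKT1 and a filling in ASSF are each uniquely determined by the sets of
   entries of its columns; in each of them these sets form a dominance chain (each column has
   at least as many entries >= t as the next one, for every t); and every dominance chain is
   the column sequence of a reverse SSYT. Since psi and Gamma preserve column sets, they are
   injective and surjective onto qKT1 and ASSF. Being particle-highest depends only on the
   column sets, so both bijections restrict to the particle-highest elements. *)

definition colvals :: "nat list list \<Rightarrow> nat \<Rightarrow> nat set" where
  "colvals F c = {ent F i c | i. incell F i c}"

definition basic_filling :: "nat list list \<Rightarrow> bool" where
  "basic_filling F \<longleftrightarrow> (\<forall>i c. incell F i c \<longrightarrow> 0 < ent F i c) \<and>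
     (\<forall>i c. 1 \<le> c \<and> incell F i (c + 1) \<longrightarrow> ent F i (c + 1) \<le> ent F i c) \<and>
     (\<forall>i i' c. incell F i c \<and> incell F i' c \<and> i \<noteq> i' \<longrightarrow> ent F i c \<noteq> ent F i' c)"

definition dominates :: "nat set \<Rightarrow> nat set \<Rightarrow> bool" where
  "dominates A B \<longleftrightarrow> (\<forall>t. card {x\<in>B. t \<le> x} \<le> card {x\<in>A. t \<le> x})"

lemma incell_iff: "incell F i c \<longleftrightarrow> 1 \<le> c \<and> 1 \<le> i \<and> i \<le> length F \<and> c \<le> length (F ! (i - 1))"
  unfolding incell_def slen_def by auto

lemma incell_bounds: "incell F i c \<Longrightarrow> 1 \<le> i \<and> i \<le> length F \<and> 1 \<le> c"
  by (simp add: incell_iff)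

lemma incell_left: "incell F i c \<Longrightarrow> 1 \<le> c' \<Longrightarrow> c' \<le> c \<Longrightarrow> incell F i c'"
  unfolding incell_def by auto

lemma finite_incell_rows: "finite {i. incell F i c}"
  by (rule finite_subset[of _ "{1..length F}"]) (auto dest: incell_bounds)

lemma finite_colvals: "finite (colvals F c)"
  unfolding colvals_def using finite_incell_rows[of F c] by simp

lemma colvals_beyond_size: "sum_list (map length F) < c \<Longrightarrow> colvals F c = {}"
proof -
  assume c: "sum_list (map length F) < c"
  have "\<not> incell F i c" for i
  proof
    assume "incell F i c"
    then have "c \<le> length (F ! (i - 1))" "F ! (i - 1) \<in> set F" by (auto simp: incell_iff)
    then show False using c member_le_sum_list[of "length (F ! (i - 1))" "map length F"] by simp
  qed
  then show ?thesis unfolding colvals_def by auto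
qed

lemma slen_eq_card: "slen F i = card {c. incell F i c}"
proof -
  have "{c. incell F i c} = {1..slen F i}" unfolding incell_def by auto
  then show ?thesis by simp
qed

lemma basic_filling_dominates:
  assumes F: "basic_filling F" and c: "1 \<le> c"
  shows "dominates (colvals F c) (colvals F (Suc c))"
  unfolding dominates_def
proof
  fix t
  define R where "R = {i. incell F i (Suc c) \<and> t \<le> ent F i (Suc c)}"
  have finR: "finite R" unfolding R_def using finite_incell_rows[of F "Suc c"] by simp
  have left: "incell F i c" if "i \<in> R" for i
    using that c incell_left[of F i "Suc c" c] unfolding R_def by simp
  have "{x \<in> colvals F (Suc c). t \<le> x} = (\<lambda>i. ent F i (Suc c)) ` R"
    unfolding R_def colvals_def by auto
  then have "card {x \<in> colvals F (Suc c). t \<le> x} \<le> card R"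
    using card_image_le[OF finR] by simp
  also have "\<dots> = card ((\<lambda>i. ent F i c) ` R)"
    using F left unfolding basic_filling_def by (intro card_image[symmetric] inj_onI) blast
  also have "\<dots> \<le> card {x \<in> colvals F c. t \<le> x}"
  proof (rule card_mono)
    show "finite {x \<in> colvals F c. t \<le> x}" using finite_colvals by simp
    have "ent F i (Suc c) \<le> ent F i c" if "i \<in> R" for i
      using F c that unfolding basic_filling_def R_def by auto
    then show "(\<lambda>i. ent F i c) ` R \<subseteq> {x \<in> colvals F c. t \<le> x}"
      using left unfolding R_def colvals_def by fastforce
  qed
  finally show "card {x \<in> colvals F (Suc c). t \<le> x} \<le> card {x \<in> colvals F c. t \<le> x}" .
qed

lemma filling_eqI:
  assumes len: "length F = length G"
    and cells: "\<And>i c. incell F i c \<longleftrightarrow> incell G i c"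
    and entries: "\<And>i c. incell F i c \<Longrightarrow> ent F i c = ent G i c"
  shows "F = G"
proof (rule nth_equalityI)
  show "length F = length G" by (rule len)
  fix k assume k: "k < length F"
  have "slen F (Suc k) = slen G (Suc k)" using cells by (simp add: slen_eq_card)
  then have row_len: "length (F ! k) = length (G ! k)" using k len by (simp add: slen_def)
  show "F ! k = G ! k"
  proof (rule nth_equalityI)
    show "length (F ! k) = length (G ! k)" by (rule row_len)
    fix m assume "m < length (F ! k)"
    then have "incell F (Suc k) (Suc m)" using k by (simp add: incell_iff)
    then show "F ! k ! m = G ! k ! m" using entries by (force simp: ent_def)
  qed
qed

lemma skyline_length_eq:
  assumes "skyline_ok F" "skyline_ok G" "\<And>i. slen F i = slen G i"
  shows "length F = length G"
proof -
  have "length X \<le> length Y" if "skyline_ok X" "\<And>i. slen X i = slen Y i" for X Y :: "nat list list"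
  proof (rule ccontr)
    assume "\<not> length X \<le> length Y"
    then have "X \<noteq> []" "slen Y (length X) = 0" by (auto simp: slen_def)
    moreover from this have "slen X (length X) \<noteq> 0"
      using that(1) unfolding skyline_ok_def by (simp add: slen_def last_conv_nth Suc_le_eq)
    ultimately show False using that(2) by simp
  qed
  then have "length F \<le> length G" "length G \<le> length F" using assms by auto
  then show ?thesis by simp
qed

lemma skyline_eqI:
  assumes "skyline_ok F" "skyline_ok G"
    and "\<And>i c. incell F i c \<longleftrightarrow> incell G i c"
    and "\<And>i c. incell F i c \<Longrightarrow> ent F i c = ent G i c"
  shows "F = G"
  using assms by (intro filling_eqI skyline_length_eq) (simp_all add: slen_eq_card)

lemma occs_eq_colvals: "occs F = {(c, v). 1 \<le> c \<and> v \<in> colvals F c}"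
proof -
  have "(\<exists>r < length F. 1 \<le> c \<and> c \<le> length (F ! r) \<and> F ! r ! (c - 1) = v) \<longleftrightarrow>
      1 \<le> c \<and> v \<in> colvals F c" for c v
  proof
    assume "\<exists>r < length F. 1 \<le> c \<and> c \<le> length (F ! r) \<and> F ! r ! (c - 1) = v"
    then obtain r where "r < length F" "1 \<le> c" "c \<le> length (F ! r)" "F ! r ! (c - 1) = v" by blast
    then have "incell F (Suc r) c" "ent F (Suc r) c = v" by (simp_all add: incell_iff ent_def)
    then show "1 \<le> c \<and> v \<in> colvals F c" unfolding colvals_def using \<open>1 \<le> c\<close> by blast
  next
    assume "1 \<le> c \<and> v \<in> colvals F c"
    then obtain i where "incell F i c" "ent F i c = v" unfolding colvals_def by blast
    then show "\<exists>r < length F. 1 \<le> c \<and> c \<le> length (F ! r) \<and> F ! r ! (c - 1) = v"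
      by (intro exI[of _ "i - 1"]) (auto simp: incell_iff ent_def)
  qed
  then show ?thesis unfolding occs_def by simp
qed

lemma particle_highest_cong:
  assumes "\<And>c. 1 \<le> c \<Longrightarrow> colvals F c = colvals G c"
  shows "particle_highest F = particle_highest G"
proof -
  have "occs F = occs G" unfolding occs_eq_colvals using assms by auto
  then show ?thesis unfolding particle_highest_def vals_def by simp
qed

lemma colset_eq_colvals: "1 \<le> c \<Longrightarrow> colset V c = colvals V c"
  unfolding colset_def colV_def colvals_def by (force simp: incell_iff ent_def)

section \<open>Reverse SSYT are determined by their column sets\<close>

lemma revSSYT_length_antimono:
  assumes "V \<in> revSSYT" "r \<le> r'" "r' < length V"
  shows "length (V ! r') \<le> length (V ! r)"
proof (cases "r = r'")
  case False
  then have "r < r'" using assms(2) by simp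
  moreover have "sorted_wrt (\<lambda>a b. b \<le> a) (map length V)" using assms(1) unfolding revSSYT_def by simp
  ultimately show ?thesis using assms(3) by (auto simp: sorted_wrt_iff_nth_less)
qed simp

lemma revSSYT_col_less:
  assumes "V \<in> revSSYT" "r < r'" "r' < length V" "c < length (V ! r')"
  shows "V ! r' ! c < V ! r ! c"
  using assms(2-4)
proof (induction r')
  case 0
  then show ?case by simp
next
  case (Suc r'')
  have cc: "\<forall>r j. Suc r < length V \<and> j < length (V ! Suc r) \<longrightarrow> V ! Suc r ! j < V ! r ! j"
    using assms(1) unfolding revSSYT_def by simp
  have step: "V ! Suc r'' ! c < V ! r'' ! c" using cc Suc.prems by blast
  show ?case
  proof (cases "r = r''")
    case True
    then show ?thesis using step by simp
  next
    case False
    then have "r < r''" using Suc.prems by simp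
    moreover have "c < length (V ! r'')"
      using revSSYT_length_antimono[OF assms(1), of r'' "Suc r''"] Suc.prems by simp
    ultimately have "V ! r'' ! c < V ! r ! c" using Suc.IH Suc.prems by simp
    then show ?thesis using step by simp
  qed
qed

lemma revSSYT_incell_above:
  assumes "V \<in> revSSYT" "incell V i' c" "1 \<le> i" "i \<le> i'"
  shows "incell V i c"
proof -
  have "i - 1 \<le> i' - 1" "i' - 1 < length V" using assms by (auto simp: incell_iff)
  then have "length (V ! (i' - 1)) \<le> length (V ! (i - 1))" using revSSYT_length_antimono[OF assms(1)] by blast
  then show ?thesis using assms by (auto simp: incell_iff)
qed

lemma revSSYT_ent_less:
  assumes "V \<in> revSSYT" "incell V i' c" "1 \<le> i" "i < i'"
  shows "ent V i' c < ent V i c"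
  using assms revSSYT_col_less[OF assms(1), of "i - 1" "i' - 1" "c - 1"] by (auto simp: incell_iff ent_def)

lemma revSSYT_basic_filling:
  assumes "V \<in> revSSYT"
  shows "basic_filling V"
proof -
  have rows: "\<forall>row\<in>set V. row \<noteq> [] \<and> (\<forall>x\<in>set row. 0 < x) \<and> sorted_wrt (\<lambda>a b. b \<le> a) row"
    using assms unfolding revSSYT_def by simp
  have pos: "0 < ent V i c" if "incell V i c" for i c
  proof -
    have "V ! (i - 1) \<in> set V" using that by (auto simp: incell_iff)
    moreover have "V ! (i - 1) ! (c - 1) \<in> set (V ! (i - 1))" using that by (auto simp: incell_iff)
    ultimately show ?thesis using rows by (auto simp: ent_def)
  qed
  have dec: "ent V i (c + 1) \<le> ent V i c" if "1 \<le> c" "incell V i (c + 1)" for i c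
  proof -
    have "V ! (i - 1) \<in> set V" using that by (auto simp: incell_iff)
    then have "sorted_wrt (\<lambda>a b. b \<le> a) (V ! (i - 1))" using rows by simp
    then show ?thesis using that by (auto simp: incell_iff ent_def sorted_wrt_iff_nth_less)
  qed
  have dis: "ent V i c \<noteq> ent V i' c" if "incell V i c" "incell V i' c" "i \<noteq> i'" for i i' c
  proof (cases "i < i'")
    case True
    then show ?thesis using revSSYT_ent_less[OF assms that(2)] that(1) incell_bounds by fastforce
  next
    case False
    then have "i' < i" using that(3) by simp
    then show ?thesis using revSSYT_ent_less[OF assms that(1)] that(2) incell_bounds by fastforce
  qed
  show ?thesis unfolding basic_filling_def using pos dec dis by blast
qed

lemma revSSYT_skyline_ok: "V \<in> revSSYT \<Longrightarrow> skyline_ok V"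
  unfolding revSSYT_def skyline_ok_def by auto

text \<open>The row of an entry is its rank in its column, so the column sets determine the
  tableau.\<close>

lemma revSSYT_card_col_ge:
  assumes "V \<in> revSSYT" "incell V i c"
  shows "card {y \<in> colvals V c. ent V i c \<le> y} = i"
proof -
  have ib: "1 \<le> i" using assms(2) incell_bounds by blast
  have "{y \<in> colvals V c. ent V i c \<le> y} = (\<lambda>i'. ent V i' c) ` {1..i}"
  proof (rule set_eqI)
    fix y
    show "y \<in> {y \<in> colvals V c. ent V i c \<le> y} \<longleftrightarrow> y \<in> (\<lambda>i'. ent V i' c) ` {1..i}"
    proof
      assume "y \<in> {y \<in> colvals V c. ent V i c \<le> y}"
      then obtain i' where i': "incell V i' c" "y = ent V i' c" "ent V i c \<le> y" unfolding colvals_def by auto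
      have "i' \<le> i"
      proof (rule ccontr)
        assume "\<not> i' \<le> i"
        then have "ent V i' c < ent V i c" using revSSYT_ent_less[OF assms(1) i'(1) ib] by simp
        then show False using i' by simp
      qed
      moreover have "1 \<le> i'" using i'(1) incell_bounds by blast
      ultimately show "y \<in> (\<lambda>i'. ent V i' c) ` {1..i}" using i'(2) by auto
    next
      assume "y \<in> (\<lambda>i'. ent V i' c) ` {1..i}"
      then obtain i' where i': "1 \<le> i'" "i' \<le> i" "y = ent V i' c" by auto
      have inc: "incell V i' c" using revSSYT_incell_above[OF assms i'(1,2)] .
      have "ent V i c \<le> y"
        using revSSYT_ent_less[OF assms(1,2) i'(1)] i' by (cases "i' = i") auto
      then show "y \<in> {y \<in> colvals V c. ent V i c \<le> y}" using inc i' unfolding colvals_def by blast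
    qed
  qed
  moreover have "inj_on (\<lambda>i'. ent V i' c) {1..i}"
  proof (rule inj_onI)
    fix a b assume ab: "a \<in> {1..i}" "b \<in> {1..i}" "ent V a c = ent V b c"
    have "incell V a c" "incell V b c" using revSSYT_incell_above[OF assms] ab by auto
    then show "a = b" using revSSYT_basic_filling[OF assms(1)] ab(3) unfolding basic_filling_def by blast
  qed
  ultimately show ?thesis by (simp add: card_image)
qed

lemma revSSYT_colvals_inj:
  assumes "V \<in> revSSYT" "W \<in> revSSYT" "\<And>c. 1 \<le> c \<Longrightarrow> colvals V c = colvals W c"
  shows "V = W"
proof -
  have one: "incell Y i c \<and> ent Y i c = ent X i c"
    if XY: "X \<in> revSSYT" "Y \<in> revSSYT" "\<And>c. 1 \<le> c \<Longrightarrow> colvals X c = colvals Y c" and inc: "incell X i c"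
    for X Y i c
  proof -
    have c1: "1 \<le> c" using inc incell_bounds by blast
    have "ent X i c \<in> colvals Y c" using XY(3)[OF c1] inc unfolding colvals_def by blast
    then obtain i' where i': "incell Y i' c" "ent Y i' c = ent X i c" unfolding colvals_def by auto
    have "i' = card {y \<in> colvals Y c. ent Y i' c \<le> y}" using revSSYT_card_col_ge[OF XY(2) i'(1)] by simp
    also have "\<dots> = card {y \<in> colvals X c. ent X i c \<le> y}" using XY(3)[OF c1] i'(2) by simp
    also have "\<dots> = i" using revSSYT_card_col_ge[OF XY(1) inc] .
    finally show ?thesis using i' by simp
  qed
  show ?thesis
  proof (rule skyline_eqI)
    show "skyline_ok V" "skyline_ok W" using assms revSSYT_skyline_ok by auto
    show "incell V i c \<longleftrightarrow> incell W i c" for i c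
      using one[OF assms(1,2,3)] one[OF assms(2,1)] assms(3) by metis
    show "incell V i c \<Longrightarrow> ent V i c = ent W i c" for i c
      using one[OF assms(1,2,3)] by metis
  qed
qed

lemma revSSYT_colset_beyond_width:
  assumes V: "V \<in> revSSYT" and c: "width V < c"
  shows "colset V c = {}"
proof -
  have "\<not> c \<le> length (V ! r)" if "r < length V" for r
  proof -
    have "length (V ! r) \<le> length (V ! 0)" using revSSYT_length_antimono[OF V, of 0 r] that by simp
    moreover have "V \<noteq> []" using that by auto
    then have "width V = length (V ! 0)" unfolding width_def by (simp add: hd_conv_nth)
    ultimately show ?thesis using c by simp
  qed
  then show ?thesis unfolding colset_def colV_def by auto
qed

section \<open>Every dominance chain is the column sequence of a reverse SSYT\<close>

definition nth_largest :: "nat set \<Rightarrow> nat \<Rightarrow> nat" where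
  "nth_largest S r = rev (sorted_list_of_set S) ! r"

lemma rev_sorted_list_of_set:
  assumes "finite S"
  shows "sorted_wrt (>) (rev (sorted_list_of_set S))" "length (rev (sorted_list_of_set S)) = card S"
    "set (rev (sorted_list_of_set S)) = S"
  using assms by (auto simp: sorted_wrt_rev)

lemma strict_desc_nth_le_iff:
  fixes xs :: "nat list"
  assumes "sorted_wrt (>) xs" "j < length xs" "r < length xs"
  shows "xs ! r \<le> xs ! j \<longleftrightarrow> j \<le> r"
proof
  assume "xs ! r \<le> xs ! j"
  then show "j \<le> r" using assms sorted_wrt_nth_less[OF assms(1), of r j] by (cases "j \<le> r") auto
next
  assume "j \<le> r"
  then show "xs ! r \<le> xs ! j" using assms sorted_wrt_nth_less[OF assms(1), of j r] by (cases "j = r") auto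
qed

lemma nth_largest_in: "finite S \<Longrightarrow> r < card S \<Longrightarrow> nth_largest S r \<in> S"
  unfolding nth_largest_def using rev_sorted_list_of_set[of S] by (metis nth_mem)

lemma nth_largest_less: "finite S \<Longrightarrow> r < r' \<Longrightarrow> r' < card S \<Longrightarrow> nth_largest S r' < nth_largest S r"
  unfolding nth_largest_def using rev_sorted_list_of_set[of S] sorted_wrt_nth_less by metis

lemma nth_largest_image: "finite S \<Longrightarrow> nth_largest S ` {..<card S} = S"
proof -
  assume f: "finite S"
  let ?xs = "rev (sorted_list_of_set S)"
  have "set ?xs = {?xs ! i | i. i < length ?xs}" by (rule set_conv_nth)
  also have "\<dots> = nth_largest S ` {..<card S}" unfolding nth_largest_def using rev_sorted_list_of_set(2)[OF f] by auto
  finally show ?thesis using rev_sorted_list_of_set(3)[OF f] by simp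
qed

lemma card_ge_nth_largest:
  assumes f: "finite S" and r: "r < card S"
  shows "card {x \<in> S. nth_largest S r \<le> x} = Suc r"
proof -
  let ?xs = "rev (sorted_list_of_set S)"
  have d: "sorted_wrt (>) ?xs" "length ?xs = card S" "set ?xs = S" using rev_sorted_list_of_set[OF f] by auto
  have "{x \<in> S. nth_largest S r \<le> x} = (\<lambda>j. ?xs ! j) ` {..r}"
  proof (rule set_eqI)
    fix x
    show "x \<in> {x \<in> S. nth_largest S r \<le> x} \<longleftrightarrow> x \<in> (\<lambda>j. ?xs ! j) ` {..r}"
    proof
      assume "x \<in> {x \<in> S. nth_largest S r \<le> x}"
      then have xin: "x \<in> set ?xs" "?xs ! r \<le> x" using d by (auto simp: nth_largest_def)
      then obtain j where "j < length ?xs" "x = ?xs ! j" using in_set_conv_nth[of x ?xs] by metis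
      with xin have "j < length ?xs" "x = ?xs ! j" "?xs ! r \<le> x" by auto
      then show "x \<in> (\<lambda>j. ?xs ! j) ` {..r}" using strict_desc_nth_le_iff[OF d(1)] d r by auto
    next
      assume "x \<in> (\<lambda>j. ?xs ! j) ` {..r}"
      then obtain j where jj: "j \<le> r" "x = ?xs ! j" by auto
      have "?xs ! j \<in> S" using nth_largest_in[OF f, of j] jj r by (simp add: nth_largest_def)
      then show "x \<in> {x \<in> S. nth_largest S r \<le> x}" using strict_desc_nth_le_iff[OF d(1), of j r] d r jj
        by (auto simp: nth_largest_def)
    qed
  qed
  moreover have "inj_on (\<lambda>j. ?xs ! j) {..r}"
  proof -
    have "distinct ?xs" by simp
    then show ?thesis using d r by (auto simp: inj_on_def nth_eq_iff_index_eq)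
  qed
  ultimately show ?thesis by (simp add: card_image)
qed

lemma card_gt_nth_largest:
  assumes f: "finite S" and r: "r < card S"
  shows "card {x \<in> S. nth_largest S r < x} = r"
proof -
  have "{x \<in> S. nth_largest S r \<le> x} = insert (nth_largest S r) {x \<in> S. nth_largest S r < x}"
    using nth_largest_in[OF f r] by auto
  moreover have "nth_largest S r \<notin> {x \<in> S. nth_largest S r < x}" by simp
  moreover have "finite {x \<in> S. nth_largest S r < x}" using f by simp
  ultimately show ?thesis using card_ge_nth_largest[OF f r] by simp
qed

lemma dominates_card_le: "dominates A B \<Longrightarrow> card B \<le> card A"
  unfolding dominates_def by (drule spec[of _ 0]) simp

lemma dominates_remove:
  assumes fA: "finite A" and fB: "finite B" and dm: "dominates A B" and a: "a \<in> A" and b: "b \<in> B"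
    and ba: "b \<le> a" and mn: "\<forall>x\<in>A. b \<le> x \<longrightarrow> a \<le> x"
  shows "dominates (A - {a}) (B - {b})"
  unfolding dominates_def
proof
  fix t
  have dt: "card {x \<in> B. t \<le> x} \<le> card {x \<in> A. t \<le> x}" for t using dm unfolding dominates_def by blast
  consider "t \<le> b" | "a < t" | "b < t" "t \<le> a" by linarith
  then show "card {x \<in> B - {b}. t \<le> x} \<le> card {x \<in> A - {a}. t \<le> x}"
  proof cases
    case 1
    have eB: "{x \<in> B - {b}. t \<le> x} = {x \<in> B. t \<le> x} - {b}" by auto
    have eA: "{x \<in> A - {a}. t \<le> x} = {x \<in> A. t \<le> x} - {a}" by auto
    have "card {x \<in> B - {b}. t \<le> x} = card {x \<in> B. t \<le> x} - 1"
      unfolding eB using b 1 fB by (simp add: card_Diff_singleton)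
    moreover have "card {x \<in> A - {a}. t \<le> x} = card {x \<in> A. t \<le> x} - 1"
      unfolding eA using a 1 ba fA by (simp add: card_Diff_singleton)
    ultimately show ?thesis using dt[of t] by simp
  next
    case 2
    have "{x \<in> B - {b}. t \<le> x} = {x \<in> B. t \<le> x}" using 2 ba by auto
    moreover have "{x \<in> A - {a}. t \<le> x} = {x \<in> A. t \<le> x}" using 2 by auto
    ultimately show ?thesis using dt[of t] by simp
  next
    case 3
    have "{x \<in> B - {b}. t \<le> x} \<subseteq> {x \<in> B. b \<le> x} - {b}" using 3 by auto
    then have "card {x \<in> B - {b}. t \<le> x} \<le> card ({x \<in> B. b \<le> x} - {b})"
      using fB by (intro card_mono) auto
    also have "\<dots> = card {x \<in> B. b \<le> x} - 1" using b fB by (simp add: card_Diff_singleton)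
    also have "\<dots> \<le> card {x \<in> A. b \<le> x} - 1" using dt[of b] by simp
    also have "\<dots> = card ({x \<in> A. b \<le> x} - {a})" using a ba fA by (simp add: card_Diff_singleton)
    also have "{x \<in> A. b \<le> x} - {a} = {x \<in> A - {a}. t \<le> x}"
    proof (rule set_eqI)
      fix x
      show "x \<in> {x \<in> A. b \<le> x} - {a} \<longleftrightarrow> x \<in> {x \<in> A - {a}. t \<le> x}"
        using mn 3 by auto
    qed
    finally show ?thesis .
  qed
qed

lemma dominates_empty: "dominates A {}"
  unfolding dominates_def by simp

lemma nth_largest_dominated:
  assumes fA: "finite A" and fB: "finite B" and dm: "dominates A B" and r: "r < card B"
  shows "nth_largest B r \<le> nth_largest A r"
proof (rule ccontr)
  assume "\<not> nth_largest B r \<le> nth_largest A r"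
  then have lt: "nth_largest A r < nth_largest B r" by simp
  have rA: "r < card A" using dominates_card_le[OF dm] r by simp
  have "Suc r = card {x \<in> B. nth_largest B r \<le> x}" using card_ge_nth_largest[OF fB r] by simp
  also have "\<dots> \<le> card {x \<in> A. nth_largest B r \<le> x}" using dm unfolding dominates_def by blast
  also have "\<dots> \<le> card {x \<in> A. nth_largest A r < x}"
    using fA lt by (intro card_mono) auto
  also have "\<dots> = r" using card_gt_nth_largest[OF fA rA] .
  finally show False by simp
qed

locale dominance_chain =
  fixes K :: "nat \<Rightarrow> nat set" and w :: nat
  assumes finite_col: "finite (K c)"
    and positive: "x \<in> K c \<Longrightarrow> 0 < x"
    and dominates_next: "1 \<le> c \<Longrightarrow> dominates (K c) (K (Suc c))"
    and empty_beyond: "w < c \<Longrightarrow> K c = {}"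
begin

lemma card_antimono:
  assumes "1 \<le> c" "c \<le> c'"
  shows "card (K c') \<le> card (K c)"
  using assms(2,1)
proof (induction c' rule: dec_induct)
  case (step n)
  then show ?case using dominates_card_le[OF dominates_next[of n]] by simp
qed simp

definition row_len :: "nat \<Rightarrow> nat" where
  "row_len r = (LEAST c. card (K (Suc c)) \<le> r)"

lemma le_row_len_iff:
  assumes "1 \<le> c"
  shows "c \<le> row_len r \<longleftrightarrow> r < card (K c)"
proof
  assume "c \<le> row_len r"
  show "r < card (K c)"
  proof (rule ccontr)
    assume "\<not> r < card (K c)"
    then have "card (K (Suc (c - 1))) \<le> r" using assms by simp
    then have "row_len r \<le> c - 1" unfolding row_len_def by (rule Least_le)
    then show False using \<open>c \<le> row_len r\<close> assms by simp
  qed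
next
  assume r: "r < card (K c)"
  show "c \<le> row_len r"
  proof (rule ccontr)
    assume "\<not> c \<le> row_len r"
    have "card (K (Suc (row_len r))) \<le> r"
      unfolding row_len_def by (rule LeastI[of _ w]) (simp add: empty_beyond)
    moreover have "card (K c) \<le> card (K (Suc (row_len r)))"
      using card_antimono \<open>\<not> c \<le> row_len r\<close> by simp
    ultimately show False using r by simp
  qed
qed

lemma less_card_if_less_row_len: "j < row_len r \<Longrightarrow> r < card (K (Suc j))"
  using le_row_len_iff[of "Suc j" r] by simp

text \<open>Row r takes the (r + 1)-st largest element of each column set with more than r elements
  (nth_largest counts from 0).\<close>

definition tableau :: "nat list list" where
  "tableau = map (\<lambda>r. map (\<lambda>j. nth_largest (K (Suc j)) r) [0..<row_len r]) [0..<card (K 1)]"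

lemma length_tableau: "length tableau = card (K 1)"
  unfolding tableau_def by simp

lemma length_tableau_row: "r < card (K 1) \<Longrightarrow> length (tableau ! r) = row_len r"
  unfolding tableau_def by simp

lemma tableau_nth: "r < card (K 1) \<Longrightarrow> j < row_len r \<Longrightarrow> tableau ! r ! j = nth_largest (K (Suc j)) r"
  unfolding tableau_def by simp

lemma nth_largest_antimono:
  assumes "i \<le> j" "r < card (K (Suc j))"
  shows "nth_largest (K (Suc j)) r \<le> nth_largest (K (Suc i)) r"
  using assms
proof (induction j)
  case (Suc j)
  have "r < card (K (Suc j))" using Suc.prems(2) card_antimono[of "Suc j" "Suc (Suc j)"] by simp
  moreover have "nth_largest (K (Suc (Suc j))) r \<le> nth_largest (K (Suc j)) r"
    using nth_largest_dominated[OF finite_col finite_col dominates_next[of "Suc j"] Suc.prems(2)] by simp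
  ultimately show ?case using Suc by (cases "i = Suc j") auto
qed simp

lemma tableau_rows:
  assumes "row \<in> set tableau"
  shows "row \<noteq> [] \<and> (\<forall>x\<in>set row. 0 < x) \<and> sorted_wrt (\<lambda>a b. b \<le> a) row"
proof -
  obtain r where r: "r < card (K 1)" "row = tableau ! r"
    using assms length_tableau by (auto simp: in_set_conv_nth)
  have "length row = row_len r" "1 \<le> row_len r"
    using r length_tableau_row le_row_len_iff[of 1 r] by simp_all
  then have "row \<noteq> []" by (cases row) auto
  moreover have "\<forall>x\<in>set row. 0 < x"
  proof
    fix x assume "x \<in> set row"
    then obtain j where j: "j < row_len r" "x = nth_largest (K (Suc j)) r"
      using r unfolding tableau_def by auto
    then show "0 < x" using nth_largest_in[OF finite_col less_card_if_less_row_len[OF j(1)]] positive by blast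
  qed
  moreover have "sorted_wrt (\<lambda>a b. b \<le> a) row"
    unfolding sorted_wrt_iff_nth_less
  proof (intro allI impI)
    fix i j assume "i < j" "j < length row"
    then show "row ! j \<le> row ! i"
      using r tableau_nth[OF r(1)] nth_largest_antimono less_card_if_less_row_len \<open>length row = row_len r\<close>
      by simp
  qed
  ultimately show ?thesis by blast
qed

lemma tableau_in_revSSYT: "tableau \<in> revSSYT"
proof -
  have "sorted_wrt (\<lambda>a b. b \<le> a) (map length tableau)"
    unfolding sorted_wrt_iff_nth_less
  proof (intro allI impI)
    fix i j assume ij: "i < j" "j < length (map length tableau)"
    then have "j < card (K 1)" "i < card (K 1)" using length_tableau by auto
    moreover have "row_len j \<le> row_len i"
    proof (cases "row_len j = 0")
      case False
      then have "j < card (K (row_len j))" using le_row_len_iff[of "row_len j" j] by simp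
      then show ?thesis using ij le_row_len_iff[of "row_len j" i] False by simp
    qed simp
    ultimately show "map length tableau ! j \<le> map length tableau ! i"
      using length_tableau_row length_tableau by simp
  qed
  moreover have "tableau ! Suc r ! j < tableau ! r ! j"
    if "Suc r < length tableau" "j < length (tableau ! Suc r)" for r j
  proof -
    have r: "Suc r < card (K 1)" "j < row_len (Suc r)" using that length_tableau length_tableau_row by auto
    have "r < card (K (Suc j))" using less_card_if_less_row_len[OF r(2)] by simp
    then have "j < row_len r" using le_row_len_iff[of "Suc j" r] by simp
    then show ?thesis using tableau_nth[OF r] tableau_nth[of r j] r
        nth_largest_less[OF finite_col, of r "Suc r"] less_card_if_less_row_len[OF r(2)] by simp
  qed
  ultimately show ?thesis unfolding revSSYT_def using tableau_rows by blast
qed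

lemma colvals_tableau:
  assumes c: "1 \<le> c"
  shows "colvals tableau c = K c"
proof (rule set_eqI)
  fix x
  have K1: "card (K c) \<le> card (K 1)" using card_antimono[OF _ c] by simp
  have cell: "incell tableau i c \<longleftrightarrow> 1 \<le> i \<and> i - 1 < card (K c)" for i
  proof (cases "1 \<le> i \<and> i - 1 < card (K 1)")
    case True
    then show ?thesis
      using c le_row_len_iff[OF c, of "i - 1"] length_tableau length_tableau_row[of "i - 1"]
      by (auto simp: incell_iff)
  next
    case False
    then show ?thesis using K1 length_tableau by (auto simp: incell_iff)
  qed
  have entry: "ent tableau i c = nth_largest (K c) (i - 1)" if "incell tableau i c" for i
  proof -
    have "i - 1 < card (K 1)" "c - 1 < row_len (i - 1)"
      using that cell K1 le_row_len_iff[OF c, of "i - 1"] c by auto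
    then show ?thesis using tableau_nth c by (simp add: ent_def)
  qed
  show "x \<in> colvals tableau c \<longleftrightarrow> x \<in> K c"
  proof
    assume "x \<in> colvals tableau c"
    then obtain i where "incell tableau i c" "x = ent tableau i c" unfolding colvals_def by auto
    then show "x \<in> K c" using cell entry nth_largest_in[OF finite_col] by simp
  next
    assume "x \<in> K c"
    then obtain r where r: "r < card (K c)" "x = nth_largest (K c) r"
      using nth_largest_image[OF finite_col[of c]] by auto
    then have "incell tableau (Suc r) c" "ent tableau (Suc r) c = x" using cell entry by auto
    then show "x \<in> colvals tableau c" unfolding colvals_def by blast
  qed
qed

end

lemma basic_filling_revSSYT_exists:
  assumes F: "basic_filling F"
  shows "\<exists>V\<in>revSSYT. \<forall>c\<ge>1. colvals V c = colvals F c"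
proof -
  have "0 < x" if "x \<in> colvals F c" for c x
    using that F unfolding colvals_def basic_filling_def by auto
  then interpret dominance_chain "colvals F" "sum_list (map length F)"
    using finite_colvals basic_filling_dominates[OF F] colvals_beyond_size by unfold_locales auto
  show ?thesis using tableau_in_revSSYT colvals_tableau by blast
qed

section \<open>Fillings in ASSF are determined by their column sets\<close>

lemma ASSF_basic_filling: "F \<in> ASSF \<Longrightarrow> basic_filling F"
  unfolding ASSF_def basic_filling_def by simp

lemma ASSF_skyline_ok: "F \<in> ASSF \<Longrightarrow> skyline_ok F"
  unfolding ASSF_def by simp

lemma ASSF_first_column: "F \<in> ASSF \<Longrightarrow> incell F i 1 \<Longrightarrow> ent F i 1 = i"
  unfolding ASSF_def by simp

lemma ASSF_typeA:
  "F \<in> ASSF \<Longrightarrow> r < s \<Longrightarrow> 1 \<le> c \<Longrightarrow> slen F s \<le> slen F r \<Longrightarrow> incell F s (c + 1) \<Longrightarrow>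
    inversion_triple (ent F r c) (ent F r (c + 1)) (ent F s (c + 1))"
  unfolding ASSF_def by blast

lemma ASSF_typeB:
  "F \<in> ASSF \<Longrightarrow> r < s \<Longrightarrow> slen F r < slen F s \<Longrightarrow> incell F r c \<Longrightarrow>
    inversion_triple (ent F s c) (ent F s (c + 1)) (ent F r c)"
  unfolding ASSF_def by blast

lemma ASSF_intro:
  assumes "skyline_ok F"
    "\<And>i c. incell F i c \<Longrightarrow> 0 < ent F i c"
    "\<And>i c. 1 \<le> c \<Longrightarrow> incell F i (c + 1) \<Longrightarrow> ent F i (c + 1) \<le> ent F i c"
    "\<And>i i' c. incell F i c \<Longrightarrow> incell F i' c \<Longrightarrow> i \<noteq> i' \<Longrightarrow> ent F i c \<noteq> ent F i' c"
    "\<And>r s c. r < s \<Longrightarrow> 1 \<le> c \<Longrightarrow> slen F s \<le> slen F r \<Longrightarrow> incell F s (c + 1) \<Longrightarrow>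
        inversion_triple (ent F r c) (ent F r (c + 1)) (ent F s (c + 1))"
    "\<And>r s c. r < s \<Longrightarrow> slen F r < slen F s \<Longrightarrow> incell F r c \<Longrightarrow>
        inversion_triple (ent F s c) (ent F s (c + 1)) (ent F r c)"
    "\<And>i. incell F i 1 \<Longrightarrow> ent F i 1 = i"
  shows "F \<in> ASSF"
  unfolding ASSF_def mem_Collect_eq by (intro conjI; use assms in blast)

lemma ASSF_shorter_lower_row_less:
  assumes F: "F \<in> ASSF" and rs: "r < s" and lt: "slen F r < slen F s"
  shows "1 \<le> c \<Longrightarrow> c \<le> slen F r \<Longrightarrow> ent F r c < ent F s c"
proof (induction c)
  case (Suc c)
  show ?case
  proof (cases "c = 0")
    case True
    then have "incell F r 1" "incell F s 1" using Suc.prems lt unfolding incell_def by auto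
    then show ?thesis using ASSF_first_column[OF F] rs True by simp
  next
    case False
    then have ih: "ent F r c < ent F s c" and r: "incell F r c" "incell F r (c + 1)"
      using Suc unfolding incell_def by simp_all
    have "ent F r c < ent F s (c + 1)"
      using ih ASSF_typeB[OF F rs lt r(1)] unfolding inversion_triple_def by auto
    moreover have "ent F r (c + 1) \<le> ent F r c"
      using ASSF_basic_filling[OF F] False r(2) unfolding basic_filling_def by auto
    ultimately show ?thesis by simp
  qed
qed simp

lemma ASSF_lower_row_continues:
  assumes F: "F \<in> ASSF" and rs: "r < s" and c: "1 \<le> c" and s: "incell F s (c + 1)"
    and r: "incell F r c" and le: "ent F s (c + 1) \<le> ent F r c"
  shows "incell F r (c + 1) \<and> ent F s (c + 1) < ent F r (c + 1)"
proof (cases "slen F s \<le> slen F r")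
  case True
  then have "incell F r (c + 1)" using s unfolding incell_def by simp
  then show ?thesis using le ASSF_typeA[OF F rs c True s] unfolding inversion_triple_def by auto
next
  case False
  then have lt: "slen F r < slen F s" by simp
  have "ent F r c < ent F s c"
    using ASSF_shorter_lower_row_less[OF F rs lt] r unfolding incell_def by simp
  then have "ent F r c < ent F s (c + 1)"
    using ASSF_typeB[OF F rs lt r] unfolding inversion_triple_def by auto
  then show ?thesis using le by simp
qed

text \<open>The row of an entry x of column c + 1 is the lowest row whose column-c entry is at
  least x and which does not already hold a larger entry in column c + 1: this is how Gamma
  places x, so such a filling is recovered by placing the entries of column c + 1 in decreasing
  order.\<close>

lemma ASSF_row_of_entry:
  assumes F: "F \<in> ASSF" and c: "1 \<le> c" and j: "incell F j (Suc c)" "ent F j (Suc c) = x"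
  shows "j = (LEAST r. incell F r c \<and> x \<le> ent F r c \<and> \<not> (incell F r (Suc c) \<and> x < ent F r (Suc c)))"
proof (rule Least_equality[symmetric])
  have "incell F j c" using j(1) c incell_left[of F j "Suc c" c] by simp
  moreover have "x \<le> ent F j c" using ASSF_basic_filling[OF F] j c unfolding basic_filling_def by force
  ultimately show "incell F j c \<and> x \<le> ent F j c \<and> \<not> (incell F j (Suc c) \<and> x < ent F j (Suc c))"
    using j by simp
next
  fix r assume r: "incell F r c \<and> x \<le> ent F r c \<and> \<not> (incell F r (Suc c) \<and> x < ent F r (Suc c))"
  show "j \<le> r"
  proof (rule ccontr)
    assume "\<not> j \<le> r"
    then have "r < j" by simp
    from ASSF_lower_row_continues[OF F this c] j r show False by simp
  qed
qed

lemma ASSF_next_column_agree: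
  assumes F: "F \<in> ASSF" and G: "G \<in> ASSF" and c: "1 \<le> c"
    and K: "colvals F (Suc c) = colvals G (Suc c)"
    and cells: "\<And>i. incell F i c \<longleftrightarrow> incell G i c"
    and entries: "\<And>i. incell F i c \<Longrightarrow> ent F i c = ent G i c"
    and i: "incell F i (Suc c)"
  shows "incell G i (Suc c) \<and> ent G i (Suc c) = ent F i (Suc c)"
proof -
  let ?K = "colvals F (Suc c)"
  let ?Q = "\<lambda>H x r. incell H r c \<and> x \<le> ent H r c \<and> \<not> (incell H r (Suc c) \<and> x < ent H r (Suc c))"
  have same_row: "i = i'"
    if "incell F i (Suc c)" "ent F i (Suc c) = x" "incell G i' (Suc c)" "ent G i' (Suc c) = x"
    for x i i'
    using that
  proof (induction x arbitrary: i i' rule: measure_induct_rule[where f = "\<lambda>x. card {y \<in> ?K. x < y}"])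
    case (less x)
    have larger: "(incell F r (Suc c) \<and> x < ent F r (Suc c)) \<longleftrightarrow> (incell G r (Suc c) \<and> x < ent G r (Suc c))"
      for r
    proof -
      have fewer: "card {z \<in> ?K. y < z} < card {z \<in> ?K. x < z}" if "y \<in> ?K" "x < y" for y
        using that finite_colvals[of F "Suc c"] by (intro psubset_card_mono) auto
      have "incell G r (Suc c) \<and> ent G r (Suc c) = ent F r (Suc c)"
        if r: "incell F r (Suc c)" "x < ent F r (Suc c)" for r
      proof -
        have "ent F r (Suc c) \<in> colvals G (Suc c)" using r K unfolding colvals_def by blast
        then obtain r' where r': "incell G r' (Suc c)" "ent G r' (Suc c) = ent F r (Suc c)"
          unfolding colvals_def by auto
        moreover have "ent F r (Suc c) \<in> ?K" using r unfolding colvals_def by blast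
        ultimately show ?thesis using less.IH[OF fewer, of "ent F r (Suc c)" r r'] r by simp
      qed
      moreover have "incell F r (Suc c) \<and> ent F r (Suc c) = ent G r (Suc c)"
        if r: "incell G r (Suc c)" "x < ent G r (Suc c)" for r
      proof -
        have "ent G r (Suc c) \<in> ?K" using r K unfolding colvals_def by blast
        then obtain r' where r': "incell F r' (Suc c)" "ent F r' (Suc c) = ent G r (Suc c)"
          unfolding colvals_def by auto
        then show ?thesis using less.IH[OF fewer, of "ent G r (Suc c)" r' r] r \<open>ent G r (Suc c) \<in> ?K\<close>
          by simp
      qed
      ultimately show ?thesis by metis
    qed
    have "?Q F x = ?Q G x" using larger cells entries by auto
    then show ?case
      using ASSF_row_of_entry[OF F c less.prems(1,2)] ASSF_row_of_entry[OF G c less.prems(3,4)] by simp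
  qed
  have "ent F i (Suc c) \<in> colvals G (Suc c)" using i K unfolding colvals_def by blast
  then obtain i' where "incell G i' (Suc c)" "ent G i' (Suc c) = ent F i (Suc c)"
    unfolding colvals_def by auto
  then show ?thesis using same_row[OF i refl] by metis
qed

lemma ASSF_colvals_inj:
  assumes F: "F \<in> ASSF" and G: "G \<in> ASSF" and K: "\<And>c. 1 \<le> c \<Longrightarrow> colvals F c = colvals G c"
  shows "F = G"
proof -
  have agree: "(incell F i c \<longleftrightarrow> incell G i c) \<and> (incell F i c \<longrightarrow> ent F i c = ent G i c)"
    if "1 \<le> c" for i c
    using that
  proof (induction c arbitrary: i rule: dec_induct)
    case base
    have "incell H i 1 \<longleftrightarrow> i \<in> colvals H 1" if "H \<in> ASSF" for H
      using ASSF_first_column[OF that] unfolding colvals_def by force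
    then show ?case using ASSF_first_column F G K[of 1] by simp
  next
    case (step c)
    have KS: "colvals F (Suc c) = colvals G (Suc c)" using K by simp
    have cells: "incell F i' c \<longleftrightarrow> incell G i' c"
      and entries: "incell F i' c \<Longrightarrow> ent F i' c = ent G i' c" for i'
      using step.IH by blast+
    show ?case
      using ASSF_next_column_agree[OF F G step.hyps(1) KS cells entries, of i]
        ASSF_next_column_agree[OF G F step.hyps(1) KS[symmetric] cells[symmetric], of i] entries
      by (metis cells)
  qed
  show ?thesis
  proof (rule skyline_eqI[OF ASSF_skyline_ok[OF F] ASSF_skyline_ok[OF G]])
    show "incell F i c \<longleftrightarrow> incell G i c" for i c
      using agree[of c i] by (cases "1 \<le> c") (auto simp: incell_def)
    show "incell F i c \<Longrightarrow> ent F i c = ent G i c" for i c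
      using agree[of c i] by (auto simp: incell_def)
  qed
qed

section \<open>Quasi-key tableaux are determined by their column sets\<close>

text \<open>The conditions of qKT1 other than the skyline normalisation and the ordering of the first
  column (which follows from the last condition); unlike qKT1 they survive the removal of a
  row.\<close>

locale quasi_key =
  fixes F :: "nat list list"
  assumes entry_bounds: "incell F i c \<Longrightarrow> 0 < ent F i c \<and> ent F i c \<le> i"
    and rows_decreasing: "1 \<le> c \<Longrightarrow> incell F i (c + 1) \<Longrightarrow> ent F i (c + 1) \<le> ent F i c"
    and columns_distinct: "incell F i c \<Longrightarrow> incell F i' c \<Longrightarrow> i \<noteq> i' \<Longrightarrow> ent F i c \<noteq> ent F i' c"
    and smaller_above_continues: "r < s \<Longrightarrow> incell F r c \<Longrightarrow> incell F s c \<Longrightarrow> ent F s c < ent F r c \<Longrightarrow>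
        incell F r (c + 1) \<and> ent F s c < ent F r (c + 1)"
    and longer_row_above: "r < s \<Longrightarrow> slen F r < slen F s \<Longrightarrow> incell F r c \<Longrightarrow> incell F s (c + 1) \<Longrightarrow>
        ent F r c < ent F s (c + 1)"
    and first_column: "incell F i 1 \<Longrightarrow> ent F i 1 = i"

lemma qKT1_intro:
  assumes "skyline_ok F"
    "\<And>i c. incell F i c \<Longrightarrow> 0 < ent F i c \<and> ent F i c \<le> i"
    "\<And>i c. 1 \<le> c \<Longrightarrow> incell F i (c + 1) \<Longrightarrow> ent F i (c + 1) \<le> ent F i c"
    "\<And>i i' c. incell F i c \<Longrightarrow> incell F i' c \<Longrightarrow> i \<noteq> i' \<Longrightarrow> ent F i c \<noteq> ent F i' c"
    "\<And>r s c. r < s \<Longrightarrow> incell F r c \<Longrightarrow> incell F s c \<Longrightarrow> ent F s c < ent F r c \<Longrightarrow>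
        incell F r (c + 1) \<and> ent F s c < ent F r (c + 1)"
    "\<And>r s c. r < s \<Longrightarrow> slen F r < slen F s \<Longrightarrow> incell F r c \<Longrightarrow> incell F s (c + 1) \<Longrightarrow>
        ent F r c < ent F s (c + 1)"
    "\<And>i. incell F i 1 \<Longrightarrow> ent F i 1 = i"
  shows "F \<in> qKT1"
proof -
  have "ent F i 1 < ent F i' 1" if "incell F i 1" "incell F i' 1" "i < i'" for i i'
    using assms(7) that by simp
  then show ?thesis unfolding qKT1_def mem_Collect_eq by (intro conjI; use assms in blast)
qed

lemma qKT1_quasi_key: "F \<in> qKT1 \<Longrightarrow> quasi_key F"
  unfolding qKT1_def quasi_key_def by (elim CollectE conjE) (intro conjI allI impI; blast)

lemma qKT1_skyline_ok: "F \<in> qKT1 \<Longrightarrow> skyline_ok F"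
  unfolding qKT1_def by simp

lemma (in quasi_key) basic_filling: "basic_filling F"
  unfolding basic_filling_def using entry_bounds rows_decreasing columns_distinct by blast

lemma incell_remove_row: "1 \<le> s \<Longrightarrow> incell (F[s - 1 := []]) i c \<longleftrightarrow> incell F i c \<and> i \<noteq> s"
  by (cases "i = s") (auto simp: incell_iff nth_list_update)

lemma ent_remove_row: "1 \<le> s \<Longrightarrow> incell (F[s - 1 := []]) i c \<Longrightarrow> ent (F[s - 1 := []]) i c = ent F i c"
  by (cases "i = s") (auto simp: incell_iff ent_def nth_list_update)

lemma slen_remove_row: "1 \<le> s \<Longrightarrow> slen (F[s - 1 := []]) i = (if i = s then 0 else slen F i)"
  by (cases "1 \<le> i") (auto simp: slen_def nth_list_update)

lemma (in quasi_key) quasi_key_remove_row: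
  assumes s: "1 \<le> s"
  shows "quasi_key (F[s - 1 := []])"
proof -
  note cell = incell_remove_row[OF s] and entry = ent_remove_row[OF s]
  show ?thesis
  proof
    show "0 < ent (F[s - 1 := []]) i c \<and> ent (F[s - 1 := []]) i c \<le> i"
      if "incell (F[s - 1 := []]) i c" for i c
      using that cell entry entry_bounds by simp
    show "ent (F[s - 1 := []]) i (c + 1) \<le> ent (F[s - 1 := []]) i c"
      if "1 \<le> c" "incell (F[s - 1 := []]) i (c + 1)" for i c
      using that incell_left[of _ i "c + 1" c] cell entry rows_decreasing by simp
    show "ent (F[s - 1 := []]) i c \<noteq> ent (F[s - 1 := []]) i' c"
      if "incell (F[s - 1 := []]) i c" "incell (F[s - 1 := []]) i' c" "i \<noteq> i'" for i i' c
      using that cell entry columns_distinct by simp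
    show "incell (F[s - 1 := []]) r (c + 1) \<and> ent (F[s - 1 := []]) s' c < ent (F[s - 1 := []]) r (c + 1)"
      if "r < s'" "incell (F[s - 1 := []]) r c" "incell (F[s - 1 := []]) s' c"
        "ent (F[s - 1 := []]) s' c < ent (F[s - 1 := []]) r c" for r s' c
    proof -
      have "incell F r c" "incell F s' c" "r \<noteq> s" "ent F s' c < ent F r c"
        using that cell entry by simp_all
      then have "incell (F[s - 1 := []]) r (c + 1)" "ent F s' c < ent F r (c + 1)"
        using smaller_above_continues[OF that(1)] cell by blast+
      then show ?thesis using that entry by simp
    qed
    show "ent (F[s - 1 := []]) r c < ent (F[s - 1 := []]) s' (c + 1)"
      if "r < s'" "slen (F[s - 1 := []]) r < slen (F[s - 1 := []]) s'" "incell (F[s - 1 := []]) r c"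
        "incell (F[s - 1 := []]) s' (c + 1)" for r s' c
    proof -
      have "incell F r c" "incell F s' (c + 1)" "r \<noteq> s" "s' \<noteq> s" using that cell by auto
      then have "ent F r c < ent F s' (c + 1)"
        using longer_row_above[OF that(1)] that(2) slen_remove_row[OF s] by simp
      then show ?thesis using that entry by simp
    qed
    show "ent (F[s - 1 := []]) i 1 = i" if "incell (F[s - 1 := []]) i 1" for i
      using that cell entry first_column by simp
  qed
qed

lemma (in quasi_key) lower_row_less:
  assumes rs: "r < s" and len: "slen F r \<le> slen F s" and c: "1 \<le> c" "c \<le> slen F r"
  shows "ent F r c < ent F s c"
  using c(2)
proof (induction c rule: inc_induct)
  case base
  have cells: "incell F r (slen F r)" "incell F s (slen F r)" using c len unfolding incell_def by auto
  show ?case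
  proof (rule ccontr)
    assume "\<not> ent F r (slen F r) < ent F s (slen F r)"
    then have "ent F s (slen F r) < ent F r (slen F r)"
      using columns_distinct[OF cells] rs by (simp add: nat_neq_iff)
    then show False using smaller_above_continues[OF rs cells] unfolding incell_def by simp
  qed
next
  case (step n)
  have n: "1 \<le> n" using c(1) step.hyps(1) by simp
  have cells: "incell F r n" "incell F s n" "incell F s (n + 1)"
    using step.hyps n len unfolding incell_def by auto
  show ?case
  proof (rule ccontr)
    assume "\<not> ent F r n < ent F s n"
    then have "ent F s n < ent F r n" using columns_distinct[OF cells(1,2)] rs by (simp add: nat_neq_iff)
    then have "ent F s n < ent F r (n + 1)" using smaller_above_continues[OF rs cells(1,2)] by blast
    moreover have "ent F s (n + 1) \<le> ent F s n" using rows_decreasing[OF n cells(3)] .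
    ultimately show False using step.IH by simp
  qed
qed

text \<open>Let k be the last nonempty column. The row s holding the least entry of column k has
  length k, and its entries are read off the column sets from right to left exactly as psi
  builds a row: each is the least entry of its column that is at least the entry to its
  right.\<close>

lemma (in quasi_key) min_row:
  assumes k: "1 \<le> k" and top: "\<And>c. k < c \<Longrightarrow> colvals F c = {}"
    and s: "incell F s k" and min: "ent F s k = Min (colvals F k)"
  shows "slen F s = k"
    and "1 \<le> c \<Longrightarrow> c < k \<Longrightarrow> ent F s c = Min {x \<in> colvals F c. ent F s (Suc c) \<le> x}"
proof -
  have short: "slen F i \<le> k" for i
  proof (rule ccontr)
    assume "\<not> slen F i \<le> k"
    then have "incell F i (slen F i)" "k < slen F i" unfolding incell_def using k by auto
    then show False using top unfolding colvals_def by blast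
  qed
  show len_s: "slen F s = k" using short[of s] s unfolding incell_def by simp
  assume c: "1 \<le> c" "c < k"
  let ?a = "ent F s (Suc c)"
  have cells: "incell F s c" "incell F s (Suc c)" using s c unfolding incell_def by auto
  show "ent F s c = Min {x \<in> colvals F c. ?a \<le> x}"
  proof (rule Min_eqI[symmetric])
    show "finite {x \<in> colvals F c. ?a \<le> x}" using finite_colvals by simp
    show "ent F s c \<in> {x \<in> colvals F c. ?a \<le> x}"
      using cells rows_decreasing[OF c(1), of s] unfolding colvals_def by auto
    fix y assume "y \<in> {x \<in> colvals F c. ?a \<le> x}"
    then obtain r where r: "incell F r c" "y = ent F r c" "?a \<le> y" unfolding colvals_def by auto
    show "ent F s c \<le> y"
    proof (rule ccontr)
      assume "\<not> ent F s c \<le> y"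
      then have lt: "ent F r c < ent F s c" using r by simp
      have "r \<noteq> s" using lt by auto
      then have "(r < s \<and> slen F r < slen F s) \<or> (r < s \<and> slen F r = k) \<or> s < r"
        using short[of r] len_s by linarith
      then consider "r < s" "slen F r < slen F s" | "r < s" "slen F r = k" | "s < r" by blast
      then show False
      proof cases
        case 1
        then show False using longer_row_above[OF 1 r(1)] cells r by simp
      next
        case 2
        have "ent F r k \<in> colvals F k" using 2 k unfolding colvals_def incell_def by auto
        then have "Min (colvals F k) \<le> ent F r k" using finite_colvals by simp
        moreover have "ent F r k < ent F s k" using lower_row_less[OF 2(1)] 2(2) len_s k by simp
        ultimately show False using min by simp
      next
        case 3
        then show False using smaller_above_continues[OF 3 cells(1) r(1) lt] r by simp
      qed
    qed
  qed
qed

lemma last_nonempty_column: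
  assumes "colvals F 1 \<noteq> {}"
  obtains k where "1 \<le> k" "colvals F k \<noteq> {}" "\<And>c. k < c \<Longrightarrow> colvals F c = {}"
proof -
  define Cs where "Cs = {c. 1 \<le> c \<and> colvals F c \<noteq> {}}"
  have "Cs \<subseteq> {1..sum_list (map length F)}"
  proof
    fix c assume "c \<in> Cs"
    then have "1 \<le> c" "\<not> sum_list (map length F) < c" using colvals_beyond_size unfolding Cs_def by auto
    then show "c \<in> {1..sum_list (map length F)}" by simp
  qed
  then have "finite Cs" by (rule finite_subset) simp
  moreover have "1 \<in> Cs" using assms unfolding Cs_def by simp
  ultimately have max: "Max Cs \<in> Cs" "\<And>c. c \<in> Cs \<Longrightarrow> c \<le> Max Cs" by (auto intro: Max_in)
  show ?thesis
  proof (rule that)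
    show "1 \<le> Max Cs" "colvals F (Max Cs) \<noteq> {}" using max(1) unfolding Cs_def by auto
    show "colvals F c = {}" if "Max Cs < c" for c
    proof (rule ccontr)
      assume "colvals F c \<noteq> {}"
      then have "c \<in> Cs" using that \<open>1 \<le> Max Cs\<close> unfolding Cs_def by simp
      then show False using max(2)[of c] that by simp
    qed
  qed
qed

lemma colvals_first_empty_iff: "colvals F 1 = {} \<longleftrightarrow> (\<forall>i<length F. F ! i = [])"
proof -
  have "(\<exists>i. incell F i 1) \<longleftrightarrow> (\<exists>i<length F. F ! i \<noteq> [])"
  proof
    assume "\<exists>i. incell F i 1"
    then obtain i where "incell F i 1" ..
    then show "\<exists>i<length F. F ! i \<noteq> []" by (intro exI[of _ "i - 1"]) (auto simp: incell_iff)
  next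
    assume "\<exists>i<length F. F ! i \<noteq> []"
    then obtain i where "i < length F" "F ! i \<noteq> []" by blast
    then show "\<exists>i. incell F i 1" by (intro exI[of _ "Suc i"]) (simp add: incell_iff Suc_le_eq)
  qed
  then show ?thesis unfolding colvals_def by auto
qed

lemma (in quasi_key) colvals_remove_row:
  assumes s: "1 \<le> s"
  shows "colvals (F[s - 1 := []]) c = colvals F c - (if incell F s c then {ent F s c} else {})"
proof (rule set_eqI)
  fix x
  note cell = incell_remove_row[OF s] and entry = ent_remove_row[OF s]
  show "x \<in> colvals (F[s - 1 := []]) c \<longleftrightarrow> x \<in> colvals F c - (if incell F s c then {ent F s c} else {})"
  proof
    assume "x \<in> colvals (F[s - 1 := []]) c"
    then obtain i where "incell (F[s - 1 := []]) i c" "x = ent (F[s - 1 := []]) i c"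
      unfolding colvals_def by blast
    then have "incell F i c" "i \<noteq> s" "x = ent F i c" using cell entry by auto
    then show "x \<in> colvals F c - (if incell F s c then {ent F s c} else {})"
      using columns_distinct unfolding colvals_def by auto
  next
    assume x: "x \<in> colvals F c - (if incell F s c then {ent F s c} else {})"
    then obtain i where i: "incell F i c" "x = ent F i c" unfolding colvals_def by auto
    then have "i \<noteq> s" using x by auto
    then have "incell (F[s - 1 := []]) i c" "ent (F[s - 1 := []]) i c = x" using i cell entry by auto
    then show "x \<in> colvals (F[s - 1 := []]) c" unfolding colvals_def by blast
  qed
qed

lemma quasi_key_min_rows_eq:
  assumes F: "quasi_key F" and G: "quasi_key G"
    and K: "\<And>c. 1 \<le> c \<Longrightarrow> colvals F c = colvals G c"
    and k: "1 \<le> k" and top: "\<And>c. k < c \<Longrightarrow> colvals F c = {}"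
    and s: "incell F s k" "ent F s k = Min (colvals F k)"
    and t: "incell G t k" "ent G t k = Min (colvals G k)"
  shows "s = t" and "incell F s c \<longleftrightarrow> incell G s c" and "incell F s c \<Longrightarrow> ent F s c = ent G s c"
proof -
  have topG: "k < c \<Longrightarrow> colvals G c = {}" for c using top K k by simp
  note minF = quasi_key.min_row[OF F k top s] and minG = quasi_key.min_row[OF G k topG t]
  have same: "ent F s c = ent G t c" if "1 \<le> c" "c \<le> k" for c
    using that(2)
  proof (induction c rule: inc_induct)
    case base
    then show ?case using s t K[OF k] by simp
  next
    case (step n)
    then show ?case using minF(2) minG(2) K that(1) by auto
  qed
  show "s = t"
    using same[of 1] k s t quasi_key.first_column[OF F] quasi_key.first_column[OF G]
      incell_left[of F s k 1] incell_left[of G t k 1] by simp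
  then show "incell F s c \<longleftrightarrow> incell G s c" "incell F s c \<Longrightarrow> ent F s c = ent G s c"
    using minF(1) minG(1) same[of c] unfolding incell_def by auto
qed

lemma quasi_key_colvals_inj:
  assumes "quasi_key F" "quasi_key G" "length F = length G"
    "\<And>c. 1 \<le> c \<Longrightarrow> colvals F c = colvals G c"
  shows "F = G"
  using assms
proof (induction "card {i. i < length F \<and> F ! i \<noteq> []}" arbitrary: F G rule: less_induct)
  case less
  note F = less.prems(1) and G = less.prems(2) and len = less.prems(3) and K = less.prems(4)
  show ?case
  proof (cases "colvals F 1 = {}")
    case True
    then show ?thesis using K[of 1] colvals_first_empty_iff[of F] colvals_first_empty_iff[of G] len
      by (simp add: nth_equalityI)
  next
    case False
    then obtain k where k: "1 \<le> k" "colvals F k \<noteq> {}" "\<And>c. k < c \<Longrightarrow> colvals F c = {}"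
      using last_nonempty_column by blast
    have "Min (colvals F k) \<in> colvals F k" using k(2) finite_colvals by simp
    then obtain s where s: "incell F s k" "ent F s k = Min (colvals F k)" unfolding colvals_def by auto
    have "Min (colvals G k) \<in> colvals G k" using \<open>Min (colvals F k) \<in> colvals F k\<close> K[OF k(1)] by simp
    then obtain t where t: "incell G t k" "ent G t k = Min (colvals G k)" unfolding colvals_def by auto
    note row_s = quasi_key_min_rows_eq[OF F G K k(1,3) s t]
    have s1: "1 \<le> s" "s \<le> length F" "s - 1 < length F" using s(1) incell_bounds by fastforce+
    have row: "F ! (s - 1) = G ! (s - 1)"
    proof (rule nth_equalityI)
      have "slen F s = slen G s" using row_s(2) by (simp add: slen_eq_card)
      then show "length (F ! (s - 1)) = length (G ! (s - 1))" using s1 len by (simp add: slen_def)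
      fix j assume "j < length (F ! (s - 1))"
      then have "incell F s (Suc j)" using s1 by (simp add: incell_iff)
      then show "F ! (s - 1) ! j = G ! (s - 1) ! j" using row_s(3)[of "Suc j"] by (simp add: ent_def)
    qed
    let ?F = "F[s - 1 := []]" and ?G = "G[s - 1 := []]"
    have "colvals ?F c = colvals ?G c" if "1 \<le> c" for c
      using quasi_key.colvals_remove_row[OF F s1(1)] quasi_key.colvals_remove_row[OF G s1(1)]
        K[OF that] row_s(2,3) by simp
    moreover have "card {i. i < length ?F \<and> ?F ! i \<noteq> []} < card {i. i < length F \<and> F ! i \<noteq> []}"
    proof -
      have "{i. i < length ?F \<and> ?F ! i \<noteq> []} = {i. i < length F \<and> F ! i \<noteq> []} - {s - 1}"
        using s1 by (auto simp: nth_list_update)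
      moreover have "card ({i. i < length F \<and> F ! i \<noteq> []} - {s - 1}) < card {i. i < length F \<and> F ! i \<noteq> []}"
        by (rule card_Diff1_less) (use s(1) s1 in \<open>auto simp: incell_iff\<close>)
      ultimately show ?thesis by simp
    qed
    ultimately have "?F = ?G"
      using less.hyps quasi_key.quasi_key_remove_row[OF F s1(1)] quasi_key.quasi_key_remove_row[OF G s1(1)]
        len by simp
    then have "?F[s - 1 := F ! (s - 1)] = ?G[s - 1 := G ! (s - 1)]" using row by simp
    then show ?thesis by simp
  qed
qed

lemma quasi_key_length:
  assumes "quasi_key F" "skyline_ok F"
  shows "length F = Max (insert 0 (colvals F 1))"
proof (cases "F = []")
  case True
  then show ?thesis using colvals_first_empty_iff[of F] by simp
next
  case False
  then have "F ! (length F - 1) \<noteq> []" using assms(2) unfolding skyline_ok_def by (simp add: last_conv_nth)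
  then have "incell F (length F) 1" using False by (simp add: incell_iff Suc_le_eq)
  then have "length F \<in> colvals F 1" using quasi_key.first_column[OF assms(1)] unfolding colvals_def by force
  moreover have "x \<le> length F" if "x \<in> colvals F 1" for x
    using that quasi_key.first_column[OF assms(1)] incell_bounds unfolding colvals_def by force
  ultimately show ?thesis using finite_colvals[of F 1] by (intro Max_eqI[symmetric]) auto
qed

lemma qKT1_colvals_inj:
  assumes "F \<in> qKT1" "G \<in> qKT1" "\<And>c. 1 \<le> c \<Longrightarrow> colvals F c = colvals G c"
  shows "F = G"
  using assms qKT1_quasi_key qKT1_skyline_ok quasi_key_length[of F] quasi_key_length[of G]
  by (intro quasi_key_colvals_inj) auto

definition filling_of_rows :: "(nat \<Rightarrow> nat list) \<Rightarrow> nat \<Rightarrow> nat list list" where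
  "filling_of_rows rows R = map rows [1..<R + 1]"

lemma length_filling_of_rows: "length (filling_of_rows rows R) = R"
  unfolding filling_of_rows_def by simp

lemma nth_filling_of_rows: "1 \<le> i \<Longrightarrow> i \<le> R \<Longrightarrow> filling_of_rows rows R ! (i - 1) = rows i"
  unfolding filling_of_rows_def by (simp del: upt_Suc)

context
  fixes rows :: "nat \<Rightarrow> nat list" and R :: nat
  assumes vanish: "\<And>i. rows i \<noteq> [] \<Longrightarrow> 1 \<le> i \<and> i \<le> R"
begin

lemma slen_filling_of_rows: "slen (filling_of_rows rows R) i = length (rows i)"
proof (cases "1 \<le> i \<and> i \<le> R")
  case True
  then show ?thesis using nth_filling_of_rows[of i R rows]
    unfolding slen_def length_filling_of_rows if_P[OF True] by simp
next
  case False
  then have "rows i = []" using vanish by blast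
  then show ?thesis unfolding slen_def length_filling_of_rows if_not_P[OF False] by simp
qed

lemma incell_filling_of_rows: "incell (filling_of_rows rows R) i c \<longleftrightarrow> 1 \<le> c \<and> c \<le> length (rows i)"
  unfolding incell_def slen_filling_of_rows ..

lemma ent_filling_of_rows:
  assumes "incell (filling_of_rows rows R) i c"
  shows "ent (filling_of_rows rows R) i c = rows i ! (c - 1)"
proof -
  have "rows i \<noteq> []" using assms unfolding incell_filling_of_rows by auto
  then have "filling_of_rows rows R ! (i - 1) = rows i" using vanish nth_filling_of_rows by blast
  then show ?thesis unfolding ent_def by simp
qed

lemma colvals_filling_of_rows:
  assumes "1 \<le> c"
  shows "colvals (filling_of_rows rows R) c = {rows r ! (c - 1) | r. c \<le> length (rows r)}"
proof -
  have "colvals (filling_of_rows rows R) c = {rows i ! (c - 1) | i. incell (filling_of_rows rows R) i c}"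
  proof (rule set_eqI, rule iffI)
    fix x assume "x \<in> colvals (filling_of_rows rows R) c"
    then obtain i where "incell (filling_of_rows rows R) i c" "x = ent (filling_of_rows rows R) i c"
      unfolding colvals_def by blast
    then show "x \<in> {rows i ! (c - 1) | i. incell (filling_of_rows rows R) i c}"
      by (auto simp: ent_filling_of_rows)
  next
    fix x assume "x \<in> {rows i ! (c - 1) | i. incell (filling_of_rows rows R) i c}"
    then obtain i where "incell (filling_of_rows rows R) i c" "x = rows i ! (c - 1)" by blast
    then have "incell (filling_of_rows rows R) i c" "x = ent (filling_of_rows rows R) i c"
      by (simp_all add: ent_filling_of_rows)
    then show "x \<in> colvals (filling_of_rows rows R) c" unfolding colvals_def by blast
  qed
  then show ?thesis unfolding incell_filling_of_rows using assms by simp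
qed

end

lemma skyline_ok_filling_of_rows:
  assumes "R = 0 \<or> rows R \<noteq> []"
  shows "skyline_ok (filling_of_rows rows R)"
proof (cases "R = 0")
  case False
  then have "filling_of_rows rows R \<noteq> []" using length_filling_of_rows[of rows R] by auto
  then have "last (filling_of_rows rows R) = rows R"
    using nth_filling_of_rows[of R R rows] False by (simp add: last_conv_nth length_filling_of_rows)
  then show ?thesis using assms False unfolding skyline_ok_def by simp
qed (simp add: skyline_ok_def filling_of_rows_def)

section \<open>Gamma maps reverse SSYT into ASSF, preserving column sets\<close>

lemma sorted_wrt_last_le:
  assumes "sorted_wrt (\<lambda>a b. b \<le> a) xs" "xs \<noteq> []" "a \<in> set xs"
  shows "last xs \<le> (a :: nat)"
proof -
  obtain i where i: "i < length xs" "a = xs ! i" using assms(3) by (auto simp: in_set_conv_nth)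
  have "last xs = xs ! (length xs - 1)" using assms(2) by (simp add: last_conv_nth)
  moreover have "xs ! (length xs - 1) \<le> xs ! i"
    using assms(1) i by (cases "i = length xs - 1") (auto simp: sorted_wrt_iff_nth_less)
  ultimately show ?thesis using i by simp
qed

text \<open>The state of Gamma after columns 1, ..., c have been filled and the entries X of column
  c + 1 have been placed. Rows are indexed by their first entry, and the last clause is the
  property that makes the type A and type B triples of the result inversion triples.\<close>

locale gamma_state =
  fixes K :: "nat \<Rightarrow> nat set" and c :: nat and X :: "nat set" and g :: "nat \<Rightarrow> nat list"
  assumes finite_rows: "finite (K 1)"
    and nonempty_iff: "g r \<noteq> [] \<longleftrightarrow> r \<in> K 1"
    and row_head: "g r \<noteq> [] \<Longrightarrow> g r ! 0 = r"
    and row_sorted: "sorted_wrt (\<lambda>a b. b \<le> a) (g r)"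
    and row_length: "length (g r) \<le> Suc c"
    and column: "1 \<le> c' \<Longrightarrow> c' \<le> c \<Longrightarrow> {g r ! (c' - 1) | r. c' \<le> length (g r)} = K c'"
    and partial_column: "{g r ! c | r. Suc c \<le> length (g r)} = X"
    and column_distinct: "1 \<le> c' \<Longrightarrow> r \<noteq> r' \<Longrightarrow> c' \<le> length (g r) \<Longrightarrow> c' \<le> length (g r') \<Longrightarrow>
        g r ! (c' - 1) \<noteq> g r' ! (c' - 1)"
    and lower_row_continues: "r < s \<Longrightarrow> Suc j < length (g s) \<Longrightarrow> j < length (g r) \<Longrightarrow>
        g s ! Suc j \<le> g r ! j \<Longrightarrow> Suc j < length (g r) \<and> g s ! Suc j < g r ! Suc j"
begin

lemma finite_long_rows:
  assumes "1 \<le> c'"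
  shows "finite {r. c' \<le> length (g r) \<and> P r}"
proof -
  have "{r. c' \<le> length (g r) \<and> P r} \<subseteq> K 1"
  proof
    fix r assume "r \<in> {r. c' \<le> length (g r) \<and> P r}"
    then have "g r \<noteq> []" using assms by auto
    then show "r \<in> K 1" using nonempty_iff by simp
  qed
  then show ?thesis using finite_rows by (rule finite_subset)
qed

lemma card_rows_column:
  assumes "1 \<le> c'"
  shows "card {r. c' \<le> length (g r) \<and> P (g r ! (c' - 1))} =
    card {y \<in> {g r ! (c' - 1) | r. c' \<le> length (g r)}. P y}"
proof -
  let ?R = "{r. c' \<le> length (g r) \<and> P (g r ! (c' - 1))}"
  have "inj_on (\<lambda>r. g r ! (c' - 1)) ?R"
    using column_distinct[OF assms] unfolding inj_on_def by blast
  then have "card ?R = card ((\<lambda>r. g r ! (c' - 1)) ` ?R)" by (rule card_image[symmetric])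
  also have "(\<lambda>r. g r ! (c' - 1)) ` ?R = {y \<in> {g r ! (c' - 1) | r. c' \<le> length (g r)}. P y}"
    by blast
  finally show ?thesis .
qed

lemma place_row_exists:
  assumes c: "1 \<le> c" and dom: "dominates (K c) (K (Suc c))" and fin: "finite (K (Suc c))"
    and x: "x \<in> K (Suc c)" "X \<subseteq> K (Suc c)" "\<forall>y\<in>X. x < y"
  shows "\<exists>r. length (g r) = c \<and> x \<le> last (g r)"
proof -
  let ?A = "{r. c \<le> length (g r) \<and> x \<le> g r ! (c - 1)}"
  let ?B = "{r. Suc c \<le> length (g r) \<and> True}"
  have "card ?B = card X" using card_rows_column[of "Suc c" "\<lambda>_. True"] partial_column by simp
  also have "\<dots> \<le> card {y \<in> K (Suc c). x < y}" using x fin by (intro card_mono) auto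
  also have "\<dots> < card {y \<in> K (Suc c). x \<le> y}" using x fin by (intro psubset_card_mono) auto
  also have "\<dots> \<le> card {y \<in> K c. x \<le> y}" using dom unfolding dominates_def by blast
  also have "\<dots> = card ?A" using card_rows_column[OF c, of "\<lambda>y. x \<le> y", unfolded column[OF c order_refl]]
    by simp
  finally have less: "card ?B < card ?A" .
  have "\<not> ?A \<subseteq> ?B"
  proof
    assume "?A \<subseteq> ?B"
    then have "card ?A \<le> card ?B" by (rule card_mono[OF finite_long_rows[of "Suc c"], rotated]) simp
    then show False using less by simp
  qed
  then obtain r where "r \<in> ?A" "r \<notin> ?B" by blast
  then have "length (g r) = c" "x \<le> g r ! (c - 1)" using row_length[of r] by auto
  moreover from this have "last (g r) = g r ! (c - 1)" using c by (cases "g r") (auto simp: last_conv_nth)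
  ultimately show ?thesis by auto
qed

lemma appended_row:
  assumes s0: "length (g s0) = c" and g': "g' = g(s0 := g s0 @ [x])"
  shows "length (g' s0) = Suc c" "j < c \<Longrightarrow> g' s0 ! j = g s0 ! j" "g' s0 ! c = x"
    "r \<noteq> s0 \<Longrightarrow> g' r = g r"
    and "c' \<le> c \<Longrightarrow> c' \<le> length (g' r) \<longleftrightarrow> c' \<le> length (g r)"
    and "1 \<le> c' \<Longrightarrow> c' \<le> c \<Longrightarrow> g' r ! (c' - 1) = g r ! (c' - 1)"
    and "length (g' r) \<le> Suc c"
proof -
  have new: "g' s0 = g s0 @ [x]" "r \<noteq> s0 \<Longrightarrow> g' r = g r" for r using g' by simp_all
  then show "length (g' s0) = Suc c" "j < c \<Longrightarrow> g' s0 ! j = g s0 ! j" "g' s0 ! c = x"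
    "r \<noteq> s0 \<Longrightarrow> g' r = g r"
    using s0 by (simp_all add: nth_append)
  show "c' \<le> c \<Longrightarrow> c' \<le> length (g' r) \<longleftrightarrow> c' \<le> length (g r)"
    using new s0 by (cases "r = s0") auto
  show "1 \<le> c' \<Longrightarrow> c' \<le> c \<Longrightarrow> g' r ! (c' - 1) = g r ! (c' - 1)"
    using new s0 by (cases "r = s0") (auto simp: nth_append)
  show "length (g' r) \<le> Suc c" using new s0 row_length[of r] by (cases "r = s0") auto
qed

lemma append_partial_column:
  assumes s0: "length (g s0) = c" and g': "g' = g(s0 := g s0 @ [x])"
  shows "{g' r ! c | r. Suc c \<le> length (g' r)} = insert x X"
proof (rule set_eqI, rule iffI)
  note new = appended_row[OF s0 g']
  fix y assume "y \<in> {g' r ! c | r. Suc c \<le> length (g' r)}"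
  then obtain r where r: "y = g' r ! c" "Suc c \<le> length (g' r)" by blast
  show "y \<in> insert x X"
  proof (cases "r = s0")
    case False
    then have "y = g r ! c" "Suc c \<le> length (g r)" using r new(4) by simp_all
    then show ?thesis unfolding partial_column[symmetric] by blast
  qed (use r new(3) in simp)
next
  note new = appended_row[OF s0 g']
  fix y assume "y \<in> insert x X"
  then consider "y = x" | r where "y = g r ! c" "Suc c \<le> length (g r)"
    unfolding partial_column[symmetric] by blast
  then show "y \<in> {g' r ! c | r. Suc c \<le> length (g' r)}"
  proof cases
    case 1
    then show ?thesis using new(1,3) by (intro CollectI exI[of _ s0]) simp
  next
    case (2 r)
    then have "r \<noteq> s0" using s0 by auto
    then show ?thesis using 2 new(4) by (intro CollectI exI[of _ r]) simp
  qed
qed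

lemma append_column_distinct:
  assumes s0: "length (g s0) = c" and g': "g' = g(s0 := g s0 @ [x])" and x: "x \<notin> X"
    and a: "1 \<le> c'" "r \<noteq> r'" "c' \<le> length (g' r)" "c' \<le> length (g' r')"
  shows "g' r ! (c' - 1) \<noteq> g' r' ! (c' - 1)"
proof (cases "c' \<le> c")
  note new = appended_row[OF s0 g']
  case True
  then show ?thesis using column_distinct[OF a(1,2)] a(3,4) new(5)[OF True] new(6)[OF a(1) True] by simp
next
  note new = appended_row[OF s0 g']
  case False
  then have cc: "c' - 1 = c" "c' = Suc c" using a(3) new(7)[of r] by simp_all
  have in_X: "g' r'' ! c \<in> X" if "r'' \<noteq> s0" "Suc c \<le> length (g' r'')" for r''
    using that new(4)[of r''] unfolding partial_column[symmetric] by auto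
  consider "r = s0" | "r' = s0" | "r \<noteq> s0" "r' \<noteq> s0" by blast
  then show ?thesis
  proof cases
    case 1
    then have "g' r' ! c \<in> X" using in_X a(2,4) cc(2) by simp
    then show ?thesis unfolding cc(1) using 1 new(3) x by auto
  next
    case 2
    then have "g' r ! c \<in> X" using in_X a(2,3) cc(2) by simp
    then show ?thesis unfolding cc(1) using 2 new(3) x by auto
  next
    case 3
    then show ?thesis using column_distinct[OF a(1,2)] a(3,4) new(4) by simp
  qed
qed

lemma append_lower_row_continues:
  assumes c: "1 \<le> c" and s0: "length (g s0) = c"
    and least: "\<And>r. r < s0 \<Longrightarrow> \<not> (length (g r) = c \<and> x \<le> last (g r))"
    and xX: "\<forall>y\<in>X. x < y" and g': "g' = g(s0 := g s0 @ [x])"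
    and a: "r < s" "Suc j < length (g' s)" "j < length (g' r)" "g' s ! Suc j \<le> g' r ! j"
  shows "Suc j < length (g' r) \<and> g' s ! Suc j < g' r ! Suc j"
proof -
  note new = appended_row[OF s0 g']
  show ?thesis
  proof (cases "s = s0")
    case True
    then have rs0: "r \<noteq> s0" using a by simp
    have jc: "j < c" using a(2) True new(1) by simp
    show ?thesis
    proof (cases "Suc j < c")
      case True
      have "Suc j < length (g s0)" "g s0 ! Suc j \<le> g r ! j"
        using True s0 a(4) \<open>s = s0\<close> new(2)[of "Suc j"] new(2)[of j] new(4)[OF rs0] by auto
      then show ?thesis
        using lower_row_continues[of r s0 j] a(1,3) \<open>s = s0\<close> new(4)[OF rs0] new(2)[of "Suc j"] True
        by simp
    next
      case False
      then have jc1: "Suc j = c" using jc by linarith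
      have gr: "g' r = g r" by (rule new(4)[OF rs0])
      have lr: "c \<le> length (g r)" using a(3) jc1 unfolding gr by linarith
      have newx: "g' s0 ! Suc j = x" using new(3) unfolding jc1 .
      have xr: "x \<le> g r ! j" using a(4) unfolding \<open>s = s0\<close> newx gr .
      have "length (g r) \<noteq> c"
      proof
        assume l: "length (g r) = c"
        then have "g r \<noteq> []" using jc1 by auto
        then have "last (g r) = g r ! (length (g r) - 1)" by (rule last_conv_nth)
        also have "length (g r) - 1 = j" using l jc1 by linarith
        finally have "length (g r) = c \<and> x \<le> last (g r)" using l xr by simp
        moreover have "r < s0" using a(1) \<open>s = s0\<close> by simp
        ultimately show False using least by blast
      qed
      then have lr1: "length (g r) = Suc c" using lr row_length[of r] by linarith
      then have "Suc c \<le> length (g r)" by simp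
      then have "g r ! c \<in> X" unfolding partial_column[symmetric] by blast
      then have "x < g r ! c" using xX by blast
      then show ?thesis unfolding \<open>s = s0\<close> gr jc1 new(3) using lr1 by simp
    qed
  next
    case False
    note ss0 = False
    show ?thesis
    proof (cases "r = s0")
      case False
      then show ?thesis using lower_row_continues[OF a(1)] a new(4) ss0 by simp
    next
      case True
      have ls: "Suc j < length (g s)" using a(2) new(4)[OF ss0] by simp
      show ?thesis
      proof (cases "Suc j < c")
        case True
        have "j < length (g s0)" "g s ! Suc j \<le> g s0 ! j"
          using True s0 a(4) \<open>r = s0\<close> new(2,4) ss0 by auto
        then have "Suc j < length (g s0) \<and> g s ! Suc j < g s0 ! Suc j"
          using lower_row_continues[of s0 s j] a(1) \<open>r = s0\<close> ls by simp
        then show ?thesis using \<open>r = s0\<close> new(1,2,4) True ss0 by simp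
      next
        case False
        have "Suc j < Suc c" using ls row_length[of s] by simp
        then have jc1: "Suc j = c" using False by simp
        have "j < length (g s0)" using jc1 s0 by simp
        moreover have "g s ! Suc j \<le> g s0 ! j"
          using a(4) \<open>r = s0\<close> new(2)[of j] jc1 new(4)[OF ss0] by simp
        ultimately have "Suc j < length (g s0)"
          using lower_row_continues[of s0 s j] a(1) \<open>r = s0\<close> ls by simp
        then show ?thesis using jc1 s0 by simp
      qed
    qed
  qed
qed

lemma place_step:
  assumes c: "1 \<le> c" and dom: "dominates (K c) (K (Suc c))" and fin: "finite (K (Suc c))"
    and x: "x \<in> K (Suc c)" "X \<subseteq> K (Suc c)" "\<forall>y\<in>X. x < y"
  shows "gamma_state K c (insert x X) (gplace c g x)"
proof -
  define Pr where "Pr r \<longleftrightarrow> length (g r) = c \<and> x \<le> last (g r)" for r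
  define s0 where "s0 = (LEAST r. Pr r)"
  define g' where "g' = g(s0 := g s0 @ [x])"
  have gplace: "gplace c g x = g'" unfolding gplace_def g'_def s0_def Pr_def by (simp add: Let_def)
  have "\<exists>r. Pr r" using place_row_exists[OF assms] unfolding Pr_def .
  then have "Pr s0" unfolding s0_def by (rule LeastI_ex)
  then have s0: "length (g s0) = c" "x \<le> last (g s0)" "g s0 \<noteq> []" using c unfolding Pr_def by auto
  have least: "\<not> Pr r" if "r < s0" for r using that unfolding s0_def by (rule not_less_Least)
  note new = appended_row[OF s0(1) g'_def]
  have x_notin: "x \<notin> X" using x(3) by auto
  have "gamma_state K c (insert x X) g'"
  proof
    show "finite (K 1)" by (rule finite_rows)
    show "g' r \<noteq> [] \<longleftrightarrow> r \<in> K 1" for r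
      using nonempty_iff[of r] new(1,4) s0(3) by (cases "r = s0") auto
    show "g' r ! 0 = r" if "g' r \<noteq> []" for r
      using that row_head new(2)[of 0] new(4) s0(3) c by (cases "r = s0") auto
    show "sorted_wrt (\<lambda>a b. b \<le> a) (g' r)" for r
    proof (cases "r = s0")
      case True
      have "\<forall>a\<in>set (g s0). x \<le> a"
        using sorted_wrt_last_le[OF row_sorted s0(3)] s0(2) order_trans by blast
      then show ?thesis using True row_sorted[of s0] by (simp add: g'_def sorted_wrt_append)
    qed (use row_sorted new(4) in simp)
    show "length (g' r) \<le> Suc c" for r by (rule new(7))
    show "{g' r ! (c' - 1) | r. c' \<le> length (g' r)} = K c'" if "1 \<le> c'" "c' \<le> c" for c'
      using column[OF that] new(5)[OF that(2)] new(6)[OF that] by simp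
    show "{g' r ! c | r. Suc c \<le> length (g' r)} = insert x X"
      by (rule append_partial_column[OF s0(1) g'_def])
    show "g' r ! (c' - 1) \<noteq> g' r' ! (c' - 1)"
      if "1 \<le> c'" "r \<noteq> r'" "c' \<le> length (g' r)" "c' \<le> length (g' r')" for c' r r'
      using append_column_distinct[OF s0(1) g'_def x_notin that] .
    show "Suc j < length (g' r) \<and> g' s ! Suc j < g' r ! Suc j"
      if "r < s" "Suc j < length (g' s)" "j < length (g' r)" "g' s ! Suc j \<le> g' r ! j" for j s r
      using append_lower_row_continues[OF c s0(1) _ x(3) g'_def that] least unfolding Pr_def by blast
  qed
  then show ?thesis using gplace by simp
qed

lemma shorter_lower_row_less:
  assumes rs: "r < s" and len: "length (g r) < length (g s)"
  shows "j < length (g r) \<Longrightarrow> g r ! j < g s ! Suc j"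
proof (induction "length (g r) - j" arbitrary: j)
  case (Suc d)
  show ?case
  proof (rule ccontr)
    assume "\<not> g r ! j < g s ! Suc j"
    then have step: "Suc j < length (g r) \<and> g s ! Suc j < g r ! Suc j"
      using lower_row_continues[OF rs _ Suc.prems] Suc.prems len by simp
    then have "g r ! Suc j < g s ! Suc (Suc j)" using Suc.hyps by simp
    moreover have "g s ! Suc (Suc j) \<le> g s ! Suc j"
      using row_sorted[of s] step len by (auto simp: sorted_wrt_iff_nth_less)
    ultimately show False using step by simp
  qed
qed simp

lemma filling_in_ASSF:
  assumes X: "X = K (Suc c)" and top: "\<And>c'. Suc c < c' \<Longrightarrow> K c' = {}"
    and pos: "\<And>c' x. x \<in> K c' \<Longrightarrow> 0 < x"
  defines "R \<equiv> Max (insert 0 (K 1))" and "F \<equiv> filling_of_rows g (Max (insert 0 (K 1)))"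
  shows "F \<in> ASSF" and "1 \<le> c' \<Longrightarrow> colvals F c' = K c'"
proof -
  have vanish: "1 \<le> i \<and> i \<le> R" if "g i \<noteq> []" for i
    using nonempty_iff that pos finite_rows unfolding R_def by fastforce
  note cell = incell_filling_of_rows[where rows = g and R = R, OF vanish, unfolded R_def, folded F_def]
    and entry = ent_filling_of_rows[where rows = g and R = R, OF vanish, unfolded R_def, folded F_def]
  have slen: "slen F i = length (g i)" for i
    using slen_filling_of_rows[where rows = g and R = R, OF vanish] unfolding F_def R_def .
  have cols: "{g r ! (c' - 1) | r. c' \<le> length (g r)} = K c'" if "1 \<le> c'" for c'
  proof -
    consider "c' \<le> c" | "c' = Suc c" | "Suc c < c'" by linarith
    then show ?thesis
    proof cases
      case 3
      then have "\<not> c' \<le> length (g r)" for r using row_length[of r] by simp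
      then show ?thesis using top[OF 3] by simp
    qed (use column[OF that] partial_column X in simp_all)
  qed
  show colvals: "colvals F c' = K c'" if "1 \<le> c'" for c'
    using colvals_filling_of_rows[where rows = g and R = R, OF vanish that] cols[OF that]
    unfolding F_def R_def by simp
  have desc: "g i ! j \<le> g i ! j'" if "j' \<le> j" "j < length (g i)" for i j j'
    using row_sorted[of i] that by (cases "j = j'") (auto simp: sorted_wrt_iff_nth_less)
  show "F \<in> ASSF"
  proof (rule ASSF_intro)
    have "R = 0 \<or> g R \<noteq> []"
      using nonempty_iff[of R] finite_rows unfolding R_def by (cases "K 1 = {}") auto
    then show "skyline_ok F" unfolding F_def R_def by (rule skyline_ok_filling_of_rows)
    show "0 < ent F i c'" if "incell F i c'" for i c'
    proof -
      have "ent F i c' \<in> colvals F c'" using that unfolding colvals_def by blast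
      then show ?thesis using colvals incell_bounds[OF that] pos by auto
    qed
    show "ent F i (c' + 1) \<le> ent F i c'" if "1 \<le> c'" "incell F i (c' + 1)" for i c'
      using that cell entry desc[of "c' - 1" c' i] by simp
    show "ent F i c' \<noteq> ent F i' c'" if "incell F i c'" "incell F i' c'" "i \<noteq> i'" for i i' c'
      using that cell entry column_distinct by simp
    show "inversion_triple (ent F r c') (ent F r (c' + 1)) (ent F s (c' + 1))"
      if a: "r < s" "1 \<le> c'" "slen F s \<le> slen F r" "incell F s (c' + 1)" for r s c'
    proof -
      have len: "c' + 1 \<le> length (g s)" "c' + 1 \<le> length (g r)" using a slen cell by auto
      have e: "ent F r c' = g r ! (c' - 1)" "ent F r (c' + 1) = g r ! c'" "ent F s (c' + 1) = g s ! c'"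
        using len a(2) cell entry by auto
      have dec: "g r ! c' \<le> g r ! (c' - 1)" using desc len by simp
      have "g s ! c' < g r ! c'" if "g s ! c' \<le> g r ! (c' - 1)"
        using lower_row_continues[OF a(1), of "c' - 1"] that len a(2) by simp
      then show ?thesis unfolding inversion_triple_def e using dec by linarith
    qed
    show "inversion_triple (ent F s c') (ent F s (c' + 1)) (ent F r c')"
      if a: "r < s" "slen F r < slen F s" "incell F r c'" for r s c'
    proof -
      have len: "1 \<le> c'" "c' \<le> length (g r)" "length (g r) < length (g s)" using a slen cell by auto
      then have lt: "g r ! (c' - 1) < g s ! c'" using shorter_lower_row_less[OF a(1) len(3), of "c' - 1"] by simp
      have e: "ent F s c' = g s ! (c' - 1)" "ent F s (c' + 1) = g s ! c'" "ent F r c' = g r ! (c' - 1)"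
        using len cell entry by auto
      have "g s ! c' \<le> g s ! (c' - 1)" using desc len by simp
      then show ?thesis unfolding inversion_triple_def e using lt by linarith
    qed
    show "ent F i 1 = i" if "incell F i 1" for i
    proof -
      have "g i \<noteq> []" using that cell by auto
      then show ?thesis using that entry row_head by simp
    qed
  qed
qed

end

lemma gamma_state_place_list:
  assumes "gamma_state K c X g" and c: "1 \<le> c"
    and dom: "dominates (K c) (K (Suc c))" and fin: "finite (K (Suc c))"
    and xs: "sorted_wrt (>) xs" "set xs \<subseteq> K (Suc c)"
    and X: "X \<subseteq> K (Suc c)" "\<forall>x\<in>set xs. \<forall>y\<in>X. x < y"
  shows "gamma_state K c (X \<union> set xs) (foldl (gplace c) g xs)"
  using assms(1) xs X
proof (induction xs arbitrary: X g)
  case (Cons x xs)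
  have "gamma_state K c (insert x X) (gplace c g x)"
    using gamma_state.place_step[OF Cons.prems(1) c dom fin] Cons.prems(3-5) by simp
  then have "gamma_state K c (insert x X \<union> set xs) (foldl (gplace c) (gplace c g x) xs)"
    using Cons.prems(2-5) by (intro Cons.IH) auto
  then show ?case by simp
qed simp

lemma gamma_state_next_column:
  assumes "gamma_state K c (K (Suc c)) g"
  shows "gamma_state K (Suc c) {} g"
proof -
  interpret gamma_state K c "K (Suc c)" g by (rule assms)
  show ?thesis
  proof
    show "{g r ! (c' - 1) | r. c' \<le> length (g r)} = K c'" if "1 \<le> c'" "c' \<le> Suc c" for c'
      using that column partial_column by (cases "c' = Suc c") auto
    show "{g r ! Suc c | r. Suc (Suc c) \<le> length (g r)} = {}"
      using row_length by (auto simp: not_less_eq_eq[symmetric])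
    show "length (g r) \<le> Suc (Suc c)" for r using row_length[of r] by simp
  qed (fact finite_rows nonempty_iff row_head row_sorted column_distinct lower_row_continues)+
qed

lemma concat_if_map: "concat (map (\<lambda>r. if P r then [f r] else []) xs) = map f (filter P xs)"
  by (induction xs) auto

lemma colV_map: "colV V c = map (\<lambda>r. V ! r ! (c - 1)) (filter (\<lambda>r. c \<le> length (V ! r)) [0..<length V])"
  unfolding colV_def by (simp add: concat_if_map)

lemma revSSYT_distinct_colV:
  assumes V: "V \<in> revSSYT" and c: "1 \<le> c"
  shows "distinct (colV V c)"
  unfolding colV_map
proof (rule distinct_map[THEN iffD2], rule conjI)
  show "distinct (filter (\<lambda>r. c \<le> length (V ! r)) [0..<length V])" by simp
  show "inj_on (\<lambda>r. V ! r ! (c - 1)) (set (filter (\<lambda>r. c \<le> length (V ! r)) [0..<length V]))"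
  proof (rule inj_onI, rule ccontr)
    fix a b assume "a \<in> set (filter (\<lambda>r. c \<le> length (V ! r)) [0..<length V])"
      "b \<in> set (filter (\<lambda>r. c \<le> length (V ! r)) [0..<length V])"
      and e: "V ! a ! (c - 1) = V ! b ! (c - 1)" and "a \<noteq> b"
    then have "a < length V" "b < length V" "c - 1 < length (V ! a)" "c - 1 < length (V ! b)"
      "a < b \<or> b < a" using c by auto
    then show False using revSSYT_col_less[OF V] e by (metis less_irrefl)
  qed
qed

lemma sorted_rev_sort_distinct: "distinct xs \<Longrightarrow> sorted_wrt (>) (rev (sort (xs :: nat list)))"
  by (simp add: sorted_wrt_rev strict_sorted_iff)

lemma Gamma_fold_state:
  assumes V: "V \<in> revSSYT"
  defines "g0 \<equiv> \<lambda>r. if r \<in> set (colV V 1) then [r] else []"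
    and "step \<equiv> \<lambda>g c. foldl (gplace c) g (rev (sort (colV V (c + 1))))"
  shows "gamma_state (colvals V) b (colvals V (Suc b)) (foldl step g0 [1..<Suc b])"
proof (induction b)
  case 0
  have col1: "set (colV V 1) = colvals V 1" using colset_eq_colvals[of 1 V] by (simp add: colset_def)
  show ?case
  proof
    show "finite (colvals V 1)" by (rule finite_colvals)
    show "foldl step g0 [1..<Suc 0] r \<noteq> [] \<longleftrightarrow> r \<in> colvals V 1" for r
      unfolding g0_def col1 by simp
    show "{foldl step g0 [1..<Suc 0] r ! 0 | r. Suc 0 \<le> length (foldl step g0 [1..<Suc 0] r)} = colvals V (Suc 0)"
      using col1 unfolding g0_def by auto
  qed (auto simp: g0_def split: if_splits)
next
  case (Suc b)
  let ?K = "colvals V" and ?g = "foldl step g0 [1..<Suc b]"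
  let ?xs = "rev (sort (colV V (Suc b + 1)))"
  have set_xs: "set ?xs = ?K (Suc (Suc b))" using colset_eq_colvals[of "Suc (Suc b)" V] by (simp add: colset_def)
  have "gamma_state ?K (Suc b) ({} \<union> set ?xs) (foldl (gplace (Suc b)) ?g ?xs)"
  proof (rule gamma_state_place_list)
    show "gamma_state ?K (Suc b) {} ?g" using Suc.IH by (rule gamma_state_next_column)
    show "dominates (?K (Suc b)) (?K (Suc (Suc b)))"
      using basic_filling_dominates[OF revSSYT_basic_filling[OF V]] by simp
    show "sorted_wrt (>) ?xs" using sorted_rev_sort_distinct revSSYT_distinct_colV[OF V] by simp
  qed (use set_xs finite_colvals in auto)
  then show ?case using set_xs unfolding step_def by simp
qed

lemma Gamma_ASSF_colvals:
  assumes V: "V \<in> revSSYT"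
  shows "Gamma V \<in> ASSF \<and> (\<forall>c\<ge>1. colvals (Gamma V) c = colvals V c)"
proof -
  define g0 where "g0 = (\<lambda>r. if r \<in> set (colV V 1) then [r] else [])"
  define step where "step = (\<lambda>g c. foldl (gplace c) g (rev (sort (colV V (c + 1)))))"
  define b where "b = width V - 1"
  interpret gamma_state "colvals V" b "colvals V (Suc b)" "foldl step g0 [1..<Suc b]"
    using Gamma_fold_state[OF V] unfolding g0_def step_def .
  have "[1..<width V] = [1..<Suc b]" unfolding b_def by (cases "width V") auto
  moreover have "set (colV V 1) = colvals V 1" using colset_eq_colvals[of 1 V] by (simp add: colset_def)
  ultimately have "Gamma V = filling_of_rows (foldl step g0 [1..<Suc b]) (Max (insert 0 (colvals V 1)))"
    unfolding Gamma_def filling_of_rows_def g0_def step_def by (simp add: Let_def)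
  moreover have "colvals V c = {}" if "Suc b < c" for c
    using that revSSYT_colset_beyond_width[OF V, of c] colset_eq_colvals[of c V] unfolding b_def by simp
  moreover have "0 < x" if "x \<in> colvals V c" for c x
    using that revSSYT_basic_filling[OF V] unfolding colvals_def basic_filling_def by auto
  ultimately show ?thesis using filling_in_ASSF[OF refl] by simp
qed

section \<open>psi maps reverse SSYT into qKT1, preserving column sets\<close>

definition column_of :: "nat set list \<Rightarrow> nat \<Rightarrow> nat set" where
  "column_of cs j = (if j < length cs then cs ! j else {})"

lemma trim_split: "cs = trim cs @ rev (takeWhile (\<lambda>C. C = {}) (rev cs))"
proof -
  have "rev cs = takeWhile (\<lambda>C. C = {}) (rev cs) @ dropWhile (\<lambda>C. C = {}) (rev cs)" by simp
  then have "cs = rev (dropWhile (\<lambda>C. C = {}) (rev cs)) @ rev (takeWhile (\<lambda>C. C = {}) (rev cs))"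
    by (metis rev_append rev_rev_ident)
  then show ?thesis unfolding trim_def .
qed

lemma column_of_trim: "column_of (trim cs) j = column_of cs j"
proof -
  let ?T = "rev (takeWhile (\<lambda>C. C = {}) (rev cs))"
  have sp: "cs = trim cs @ ?T" by (rule trim_split)
  have Te: "\<forall>C\<in>set ?T. C = {}" by (auto dest: set_takeWhileD)
  show ?thesis
  proof (cases "j < length (trim cs)")
    case True
    then show ?thesis unfolding column_of_def using sp by (metis length_append nth_append trans_less_add1)
  next
    case False
    show ?thesis
    proof (cases "j < length cs")
      case True
      then have "cs ! j = ?T ! (j - length (trim cs))" using False sp by (metis nth_append)
      moreover have "j - length (trim cs) < length ?T" using True False sp
        by (metis add_diff_inverse_nat length_append nat_add_left_cancel_less)
      ultimately have "cs ! j = {}" using Te by (metis nth_mem)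
      then show ?thesis unfolding column_of_def using False True by simp
    next
      case False
      then show ?thesis unfolding column_of_def using \<open>\<not> j < length (trim cs)\<close> by simp
    qed
  qed
qed

lemma last_trim_nonempty: "trim cs \<noteq> [] \<Longrightarrow> last (trim cs) \<noteq> {}"
proof -
  assume ne: "trim cs \<noteq> []"
  then have d: "dropWhile (\<lambda>C. C = {}) (rev cs) \<noteq> []" unfolding trim_def by simp
  have "last (trim cs) = hd (dropWhile (\<lambda>C. C = {}) (rev cs))"
    unfolding trim_def using d by (simp add: last_rev)
  then show ?thesis using hd_dropWhile[OF d] by simp
qed

lemma trim_eq_Nil_iff: "trim cs = [] \<longleftrightarrow> (\<forall>j. column_of cs j = {})"
proof
  assume "trim cs = []"
  then show "\<forall>j. column_of cs j = {}" using column_of_trim[of cs] by (simp add: column_of_def)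
next
  assume a: "\<forall>j. column_of cs j = {}"
  show "trim cs = []"
  proof (rule ccontr)
    assume ne: "trim cs \<noteq> []"
    then have "last (trim cs) \<noteq> {}" by (rule last_trim_nonempty)
    moreover have "last (trim cs) = column_of (trim cs) (length (trim cs) - 1)"
      using ne by (simp add: column_of_def last_conv_nth)
    ultimately show False using a column_of_trim by simp
  qed
qed

lemma length_chain: "length (chain Cs b) = length Cs"
  by (induction Cs arbitrary: b) (simp_all add: Let_def)

lemma nth_chain: "i < length Cs \<Longrightarrow>
    chain Cs b ! i = Min {x \<in> Cs ! i. (if i = 0 then b else chain Cs b ! (i - 1)) \<le> x}"
proof (induction Cs arbitrary: b i)
  case Nil then show ?case by simp
next
  case (Cons C Cs)
  show ?case
  proof (cases i)
    case 0 then show ?thesis by (simp add: Let_def)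
  next
    case (Suc i')
    then have "i' < length Cs" using Cons.prems by simp
    then show ?thesis using Cons.IH[of i'] Suc by (cases i') (simp_all add: Let_def)
  qed
qed

definition chain_bound :: "nat list \<Rightarrow> nat \<Rightarrow> nat" where
  "chain_bound row j = (if Suc j = length row then 0 else row ! Suc j)"

lemma psi_row_nth:
  assumes "row = rev (chain (rev tcs) 0)" "j < length tcs"
  shows "length row = length tcs" "row ! j = Min {x \<in> tcs ! j. chain_bound row j \<le> x}"
proof -
  let ?ch = "chain (rev tcs) 0"
  let ?k = "length tcs"
  show lr: "length row = ?k" using assms(1) length_chain[of "rev tcs"] by simp
  have i: "?k - Suc j < length (rev tcs)" using assms(2) by simp
  have rj: "row ! j = ?ch ! (?k - Suc j)" using assms length_chain[of "rev tcs"] by (simp add: rev_nth)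
  have rt: "rev tcs ! (?k - Suc j) = tcs ! j" using assms(2) by (simp add: rev_nth)
  have "?ch ! (?k - Suc j) = Min {x \<in> tcs ! j. (if ?k - Suc j = 0 then 0 else ?ch ! (?k - Suc j - 1)) \<le> x}"
    using nth_chain[OF i, of 0] rt by simp
  moreover have "(if ?k - Suc j = 0 then 0 else ?ch ! (?k - Suc j - 1)) = chain_bound row j"
  proof (cases "Suc j = ?k")
    case True then show ?thesis unfolding chain_bound_def using lr by simp
  next
    case False
    then have "Suc j < ?k" using assms(2) by simp
    then have "row ! Suc j = ?ch ! (?k - Suc (Suc j))" using assms length_chain[of "rev tcs"] by (simp add: rev_nth)
    then show ?thesis unfolding chain_bound_def using lr False \<open>Suc j < ?k\<close> by (simp add: Suc_diff_Suc)
  qed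
  ultimately show "row ! j = Min {x \<in> tcs ! j. chain_bound row j \<le> x}" using rj by simp
qed

text \<open>Dominance of column j over column j + 1 guarantees that column j still has an entry
  at least the one chosen in column j + 1, so every Min taken by chain is over a nonempty set.\<close>

lemma psi_row_greedy:
  assumes row: "row = rev (chain (rev tcs) 0)" and ne: "tcs \<noteq> []" and lst: "last tcs \<noteq> {}"
    and fin: "\<And>j. j < length tcs \<Longrightarrow> finite (tcs ! j)"
    and dm: "\<And>j. Suc j < length tcs \<Longrightarrow> dominates (tcs ! j) (tcs ! Suc j)"
    and j: "j < length tcs"
  shows "row ! j \<in> tcs ! j \<and> chain_bound row j \<le> row ! j \<and> (\<forall>x\<in>tcs ! j. chain_bound row j \<le> x \<longrightarrow> row ! j \<le> x)"
proof -
  let ?k = "length tcs"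
  have lr: "length row = ?k" using psi_row_nth(1)[OF row j] .
  have main: "\<forall>j. ?k - Suc j = d \<longrightarrow> j < ?k \<longrightarrow> row ! j \<in> tcs ! j \<and> chain_bound row j \<le> row ! j \<and> (\<forall>x\<in>tcs ! j. chain_bound row j \<le> x \<longrightarrow> row ! j \<le> x)" for d
  proof (induction d)
    case 0
    show ?case
    proof (intro allI impI)
      fix j assume a: "?k - Suc j = 0" "j < ?k"
      then have jk: "Suc j = ?k" by simp
      have b: "chain_bound row j = 0" unfolding chain_bound_def using jk lr by simp
      have "j = length tcs - 1" using jk by simp
      then have "tcs ! j = last tcs" using ne by (simp add: last_conv_nth)
      then have S: "{x \<in> tcs ! j. chain_bound row j \<le> x} = tcs ! j" "tcs ! j \<noteq> {}" using b lst by auto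
      have eq: "row ! j = Min (tcs ! j)" using psi_row_nth(2)[OF row a(2)] S by simp
      show "row ! j \<in> tcs ! j \<and> chain_bound row j \<le> row ! j \<and> (\<forall>x\<in>tcs ! j. chain_bound row j \<le> x \<longrightarrow> row ! j \<le> x)"
        using eq fin[OF a(2)] S(2) b by simp
    qed
  next
    case (Suc d)
    show ?case
    proof (intro allI impI)
      fix j assume a: "?k - Suc j = Suc d" "j < ?k"
      then have jk: "Suc j < ?k" by simp
      have ih: "row ! Suc j \<in> tcs ! Suc j" using Suc.IH a jk by simp
      have b: "chain_bound row j = row ! Suc j" unfolding chain_bound_def using jk lr by simp
      have "row ! Suc j \<in> {x \<in> tcs ! Suc j. row ! Suc j \<le> x}" using ih by simp
      moreover have "finite {x \<in> tcs ! Suc j. row ! Suc j \<le> x}" using fin[OF jk] by simp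
      ultimately have "1 \<le> card {x \<in> tcs ! Suc j. row ! Suc j \<le> x}"
        by (metis One_nat_def Suc_leI card_gt_0_iff empty_iff)
      also have "\<dots> \<le> card {x \<in> tcs ! j. row ! Suc j \<le> x}" using dm[OF jk] unfolding dominates_def by blast
      finally have "card {x \<in> tcs ! j. row ! Suc j \<le> x} \<noteq> 0" by simp
      then have "{x \<in> tcs ! j. row ! Suc j \<le> x} \<noteq> {}" by (metis card.empty)
      then have "{x \<in> tcs ! j. chain_bound row j \<le> x} \<noteq> {}" using b by simp
      moreover have "finite {x \<in> tcs ! j. chain_bound row j \<le> x}" using fin[OF a(2)] by simp
      moreover have eq: "row ! j = Min {x \<in> tcs ! j. chain_bound row j \<le> x}" using psi_row_nth(2)[OF row a(2)] .
      ultimately show "row ! j \<in> tcs ! j \<and> chain_bound row j \<le> row ! j \<and> (\<forall>x\<in>tcs ! j. chain_bound row j \<le> x \<longrightarrow> row ! j \<le> x)"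
        using Min_in[of "{x \<in> tcs ! j. chain_bound row j \<le> x}"] Min_le[of "{x \<in> tcs ! j. chain_bound row j \<le> x}"] by auto
    qed
  qed
  show ?thesis using main j by blast
qed

text \<open>psi builds a row A from right to left, taking in column j the least available entry that
  is at least the bound A ! Suc j (or 0 in the last column). So if B is extracted later, every
  entry B ! j that meets A's bound was available and is larger than A ! j; greedy_wrt says the
  same of the entries not yet used.\<close>

definition extracted_before :: "nat list \<Rightarrow> nat list \<Rightarrow> bool" where
  "extracted_before A B \<longleftrightarrow> length B \<le> length A \<and> (\<forall>j<length B. (Suc j = length A \<or> A ! Suc j \<le> B ! j) \<longrightarrow> A ! j < B ! j)"

definition greedy_wrt :: "nat list \<Rightarrow> nat set list \<Rightarrow> bool" where
  "greedy_wrt A cs \<longleftrightarrow> (\<forall>j. length A \<le> j \<longrightarrow> column_of cs j = {}) \<and>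
     (\<forall>j<length A. \<forall>x\<in>column_of cs j. (Suc j = length A \<or> A ! Suc j \<le> x) \<longrightarrow> A ! j < x)"

lemma extracted_before_first_less:
  assumes r: "extracted_before A B" and s: "sorted_wrt (\<lambda>x y. y \<le> x) B" and j: "j < length B" and lt: "A ! j < B ! j"
  shows "A ! 0 < B ! 0"
  using j lt
proof (induction j)
  case 0 then show ?case by simp
next
  case (Suc j)
  have "B ! Suc j \<le> B ! j" using s Suc.prems(1) by (auto simp: sorted_wrt_iff_nth_less)
  then have "A ! Suc j \<le> B ! j" using Suc.prems(2) by simp
  then have "A ! j < B ! j" using r Suc.prems(1) unfolding extracted_before_def by auto
  then show ?case using Suc.IH Suc.prems(1) by simp
qed

lemma extracted_before_rows_continue:
  assumes rel: "extracted_before R S \<or> extracted_before S R" and sorted: "sorted_wrt (\<lambda>x y. y \<le> x) R"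
    and keys: "R ! 0 < S ! 0" and c: "c < length R" "c < length S" and lt: "S ! c < R ! c"
  shows "Suc c < length R \<and> S ! c < R ! Suc c"
proof -
  have "\<not> extracted_before S R" using extracted_before_first_less[OF _ sorted c(1) lt] keys by auto
  then have "extracted_before R S" using rel by blast
  then have "(Suc c = length R \<or> R ! Suc c \<le> S ! c) \<longrightarrow> R ! c < S ! c"
    using c(2) unfolding extracted_before_def by blast
  then show ?thesis using lt c(1) by auto
qed

lemma extracted_before_longer_row:
  assumes rel: "extracted_before R S \<or> extracted_before S R" and sorted: "sorted_wrt (\<lambda>x y. y \<le> x) R"
    and keys: "R ! 0 < S ! 0" and len: "length R < length S" and c: "c < length R"
  shows "R ! c < S ! Suc c"
proof (rule ccontr)
  assume "\<not> R ! c < S ! Suc c"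
  have "extracted_before S R" using rel len unfolding extracted_before_def by auto
  then have "S ! c < R ! c" using c \<open>\<not> R ! c < S ! Suc c\<close> unfolding extracted_before_def by auto
  then show False using extracted_before_first_less[OF \<open>extracted_before S R\<close> sorted c] keys by simp
qed

definition key_rows :: "(nat \<times> nat list) list \<Rightarrow> nat \<Rightarrow> nat list" where
  "key_rows ps i = (case map_of ps i of None \<Rightarrow> [] | Some row \<Rightarrow> row)"

lemma sky_of_pairs_eq: "sky_of_pairs ps = filling_of_rows (key_rows ps) (Max (insert 0 (fst ` set ps)))"
  unfolding sky_of_pairs_def filling_of_rows_def key_rows_def ..

text \<open>K j is the set of entries of column j + 1 (so
  columns are 0-indexed here), cs holds the entries not yet used, and ps the rows extracted so
  far, each paired with its first entry.\<close>

locale psi_state =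
  fixes K :: "nat \<Rightarrow> nat set" and cs :: "nat set list" and ps :: "(nat \<times> nat list) list"
  assumes finite_column: "finite (column_of cs j)"
    and dominates_next: "dominates (column_of cs j) (column_of cs (Suc j))"
    and columns_cover: "column_of cs j \<union> {A ! j | a A. (a, A) \<in> set ps \<and> j < length A} = K j"
    and extracted_not_remaining: "(a, A) \<in> set ps \<Longrightarrow> j < length A \<Longrightarrow> A ! j \<notin> column_of cs j"
    and distinct_keys: "distinct (map fst ps)"
    and extracted_rows: "(a, A) \<in> set ps \<Longrightarrow> A \<noteq> [] \<and> a = A ! 0 \<and> sorted_wrt (\<lambda>x y. y \<le> x) A"
    and extracted_distinct: "(a, A) \<in> set ps \<Longrightarrow> (b, B) \<in> set ps \<Longrightarrow> a \<noteq> b \<Longrightarrow> j < length A \<Longrightarrow>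
        j < length B \<Longrightarrow> A ! j \<noteq> B ! j"
    and extracted_before_pairwise: "(a, A) \<in> set ps \<Longrightarrow> (b, B) \<in> set ps \<Longrightarrow> a \<noteq> b \<Longrightarrow>
        extracted_before A B \<or> extracted_before B A"
    and extracted_greedy: "(a, A) \<in> set ps \<Longrightarrow> greedy_wrt A cs"

lemma greedy_wrt_mono: "greedy_wrt A cs \<Longrightarrow> (\<And>j. column_of cs' j \<subseteq> column_of cs j) \<Longrightarrow> greedy_wrt A cs'"
  unfolding greedy_wrt_def by blast

definition psi_next_row :: "nat set list \<Rightarrow> nat list" where
  "psi_next_row cs = rev (chain (rev (trim cs)) 0)"

definition psi_next_columns :: "nat set list \<Rightarrow> nat set list" where
  "psi_next_columns cs = map (\<lambda>(C, y). C - {y}) (zip (trim cs) (psi_next_row cs))"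

lemma psi_row:
  assumes ne: "trim cs \<noteq> []" and fin: "\<And>j. finite (column_of cs j)"
    and dom: "\<And>j. dominates (column_of cs j) (column_of cs (Suc j))"
  defines "row \<equiv> rev (chain (rev (trim cs)) 0)"
  shows "length row = length (trim cs)"
    and "length (trim cs) \<le> j \<Longrightarrow> column_of cs j = {}"
    and "j < length row \<Longrightarrow> row ! j \<in> column_of cs j"
    and "j < length row \<Longrightarrow> x \<in> column_of cs j \<Longrightarrow> chain_bound row j \<le> x \<Longrightarrow> row ! j \<le> x"
    and "sorted_wrt (\<lambda>x y. y \<le> x) row"
    and "row \<noteq> []"
proof -
  let ?t = "trim cs"
  have rd: "row = rev (chain (rev ?t) 0)" unfolding row_def ..
  have t: "?t ! j = column_of cs j" if "j < length ?t" for j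
    using column_of_trim[of cs j] that unfolding column_of_def by simp
  have fin': "finite (?t ! j)" if "j < length ?t" for j using t[OF that] fin by simp
  have dom': "dominates (?t ! j) (?t ! Suc j)" if "Suc j < length ?t" for j
    using t[of j] t[of "Suc j"] that dom by simp
  have greedy: "row ! j \<in> ?t ! j \<and> chain_bound row j \<le> row ! j \<and>
      (\<forall>x\<in>?t ! j. chain_bound row j \<le> x \<longrightarrow> row ! j \<le> x)" if "j < length ?t" for j
    using psi_row_greedy[OF rd ne last_trim_nonempty[OF ne] fin' dom' that] .
  show len: "length row = length ?t" using psi_row_nth(1)[OF rd, of 0] ne by simp
  show "length ?t \<le> j \<Longrightarrow> column_of cs j = {}"
    using column_of_trim[of cs j] unfolding column_of_def by simp
  show "j < length row \<Longrightarrow> row ! j \<in> column_of cs j" using greedy t len by simp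
  show "j < length row \<Longrightarrow> x \<in> column_of cs j \<Longrightarrow> chain_bound row j \<le> x \<Longrightarrow> row ! j \<le> x"
    using greedy t len by simp
  show "row \<noteq> []" using len ne by auto
  have "transp (\<lambda>x y. (y::nat) \<le> x)" by (auto simp: transp_def)
  then show "sorted_wrt (\<lambda>x y. y \<le> x) row"
    unfolding sorted_wrt_iff_nth_Suc_transp[OF \<open>transp (\<lambda>x y. (y::nat) \<le> x)\<close>]
  proof (intro allI impI)
    fix i assume i: "Suc i < length row"
    then have "chain_bound row i = row ! Suc i" unfolding chain_bound_def by simp
    then show "row ! Suc i \<le> row ! i" using greedy[of i] i len by simp
  qed
qed

lemma column_of_remove_row:
  assumes "length row = length tcs"
  shows "column_of (map (\<lambda>(C, y). C - {y}) (zip tcs row)) j =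
    (if j < length tcs then column_of tcs j - {row ! j} else {})"
  using assms unfolding column_of_def by simp

context psi_state
begin

lemma column_subset: "column_of cs j \<subseteq> K j"
  using columns_cover[of j] by blast

context
  assumes ne: "trim cs \<noteq> []"
begin

lemmas next_row = psi_row[OF ne finite_column dominates_next, folded psi_next_row_def]

lemma column_of_next_columns:
  "column_of (psi_next_columns cs) j = (if j < length (psi_next_row cs) then column_of cs j - {(psi_next_row cs) ! j} else {})"
  unfolding psi_next_columns_def column_of_remove_row[OF next_row(1)] next_row(1) column_of_trim ..

lemma next_columns_subset: "column_of (psi_next_columns cs) j \<subseteq> column_of cs j"
  unfolding column_of_next_columns by auto

lemma extracted_before_next_row:
  assumes "(b, B) \<in> set ps"
  shows "extracted_before B (psi_next_row cs)"
proof -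
  have greedy: "greedy_wrt B cs" using extracted_greedy[OF assms] .
  have "length (psi_next_row cs) \<le> length B"
  proof (rule ccontr)
    assume "\<not> length (psi_next_row cs) \<le> length B"
    then have "column_of cs (length (psi_next_row cs) - 1) = {}" using greedy unfolding greedy_wrt_def by simp
    then show False using next_row(3)[of "length (psi_next_row cs) - 1"] next_row(6) by auto
  qed
  moreover have "B ! j < (psi_next_row cs) ! j"
    if "j < length (psi_next_row cs)" "Suc j = length B \<or> B ! Suc j \<le> (psi_next_row cs) ! j" for j
    using greedy that next_row(3)[OF that(1)] \<open>length (psi_next_row cs) \<le> length B\<close>
    unfolding greedy_wrt_def by auto
  ultimately show ?thesis unfolding extracted_before_def by blast
qed

lemma greedy_next_row: "greedy_wrt (psi_next_row cs) (psi_next_columns cs)"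
  unfolding greedy_wrt_def
proof (intro conjI allI impI ballI)
  fix j assume "length (psi_next_row cs) \<le> j"
  then show "column_of (psi_next_columns cs) j = {}" unfolding column_of_next_columns by simp
next
  fix j x assume j: "j < length (psi_next_row cs)" and x: "x \<in> column_of (psi_next_columns cs) j"
    and bound: "Suc j = length (psi_next_row cs) \<or> (psi_next_row cs) ! Suc j \<le> x"
  have "x \<in> column_of cs j" "x \<noteq> (psi_next_row cs) ! j" using x j unfolding column_of_next_columns by auto
  moreover have "chain_bound (psi_next_row cs) j \<le> x" using bound unfolding chain_bound_def by auto
  ultimately show "(psi_next_row cs) ! j < x" using next_row(4)[OF j] by fastforce
qed

lemma step: "psi_state K (psi_next_columns cs) ((hd (psi_next_row cs), (psi_next_row cs)) # ps)"
proof -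
  note col' = column_of_next_columns and row = next_row
  have head: "hd (psi_next_row cs) = (psi_next_row cs) ! 0" using row(6) by (simp add: hd_conv_nth)
  have new_key: "(hd (psi_next_row cs), B) \<notin> set ps" for B
  proof
    assume B: "(hd (psi_next_row cs), B) \<in> set ps"
    then have "B ! 0 = (psi_next_row cs) ! 0" "B \<noteq> []" using extracted_rows[OF B] head by auto
    then have "B ! 0 \<notin> column_of cs 0" "B ! 0 = psi_next_row cs ! 0"
      using extracted_not_remaining[OF B, of 0] by auto
    then show False using row(3)[of 0] row(6) by auto
  qed
  show ?thesis
  proof
    show "finite (column_of (psi_next_columns cs) j)" for j
      using finite_column finite_subset[OF next_columns_subset] by blast
    show "dominates (column_of (psi_next_columns cs) j) (column_of (psi_next_columns cs) (Suc j))" for j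
    proof (cases "Suc j < length (psi_next_row cs)")
      case True
      have "dominates (column_of cs j - {(psi_next_row cs) ! j}) (column_of cs (Suc j) - {(psi_next_row cs) ! Suc j})"
      proof (rule dominates_remove[OF finite_column finite_column dominates_next])
        show "(psi_next_row cs) ! j \<in> column_of cs j" "(psi_next_row cs) ! Suc j \<in> column_of cs (Suc j)"
          using row(3) True by auto
        show "(psi_next_row cs) ! Suc j \<le> (psi_next_row cs) ! j"
          using row(5) True by (auto simp: sorted_wrt_iff_nth_less)
        show "\<forall>x\<in>column_of cs j. (psi_next_row cs) ! Suc j \<le> x \<longrightarrow> (psi_next_row cs) ! j \<le> x"
          using row(4)[of j] True unfolding chain_bound_def by auto
      qed
      then show ?thesis using True unfolding col' by simp
    qed (simp add: col' dominates_empty)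
    show "column_of (psi_next_columns cs) j \<union> {A ! j | a A. (a, A) \<in> set ((hd (psi_next_row cs), (psi_next_row cs)) # ps) \<and> j < length A}
        = K j" for j
    proof -
      have "{A ! j | a A. (a, A) \<in> set ((hd (psi_next_row cs), (psi_next_row cs)) # ps) \<and> j < length A} =
          (if j < length (psi_next_row cs) then {psi_next_row cs ! j} else {}) \<union>
          {A ! j | a A. (a, A) \<in> set ps \<and> j < length A}"
        by auto
      moreover have "j < length (psi_next_row cs) \<Longrightarrow> psi_next_row cs ! j \<in> column_of cs j"
        by (rule row(3))
      moreover have "\<not> j < length (psi_next_row cs) \<Longrightarrow> column_of cs j = {}"
        using row(1,2) by simp
      ultimately show ?thesis using columns_cover[of j] unfolding col' by (cases "j < length (psi_next_row cs)") auto
    qed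
    show "A ! j \<notin> column_of (psi_next_columns cs) j"
      if "(a, A) \<in> set ((hd (psi_next_row cs), (psi_next_row cs)) # ps)" "j < length A" for a A j
    proof (cases "(a, A) \<in> set ps")
      case True
      then show ?thesis using extracted_not_remaining[OF True that(2)] next_columns_subset by blast
    next
      case False
      then have "A = psi_next_row cs" using that(1) by simp
      then show ?thesis using that(2) unfolding col' by simp
    qed
    show "distinct (map fst ((hd (psi_next_row cs), (psi_next_row cs)) # ps))" using distinct_keys new_key by auto
    show "A \<noteq> [] \<and> a = A ! 0 \<and> sorted_wrt (\<lambda>x y. y \<le> x) A"
      if "(a, A) \<in> set ((hd (psi_next_row cs), (psi_next_row cs)) # ps)" for a A
      using that extracted_rows row(5,6) head by auto
    have new_vs_old: "psi_next_row cs ! j \<noteq> B ! j"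
      if "(b, B) \<in> set ps" "j < length (psi_next_row cs)" "j < length B" for b B j
      using extracted_not_remaining[OF that(1,3)] row(3)[OF that(2)] by auto
    show "A ! j \<noteq> B ! j"
      if "(a, A) \<in> set ((hd (psi_next_row cs), (psi_next_row cs)) # ps)"
        "(b, B) \<in> set ((hd (psi_next_row cs), (psi_next_row cs)) # ps)"
        "a \<noteq> b" "j < length A" "j < length B" for a A b B j
      using that extracted_distinct[of a A b B j] new_vs_old[of a A j] new_vs_old[of b B j] by auto
    show "extracted_before A B \<or> extracted_before B A"
      if "(a, A) \<in> set ((hd (psi_next_row cs), (psi_next_row cs)) # ps)"
        "(b, B) \<in> set ((hd (psi_next_row cs), (psi_next_row cs)) # ps)" "a \<noteq> b" for a A b B
      using that extracted_before_pairwise[of a A b B] extracted_before_next_row[of a A]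
        extracted_before_next_row[of b B] by auto
    show "greedy_wrt A (psi_next_columns cs)" if "(a, A) \<in> set ((hd (psi_next_row cs), (psi_next_row cs)) # ps)" for a A
      using that greedy_next_row greedy_wrt_mono[OF extracted_greedy next_columns_subset] by auto
  qed
qed

lemma step_consumes: "(psi_next_row cs) ! 0 \<in> column_of cs 0" "(psi_next_row cs) ! 0 \<notin> column_of (psi_next_columns cs) 0"
  using next_row(3,6) column_of_next_columns by auto

end

end

lemma psi_step_eq:
  "trim cs \<noteq> [] \<Longrightarrow> psi_step (cs, ps) = ((psi_next_columns cs), (hd (psi_next_row cs), (psi_next_row cs)) # ps)"
  unfolding psi_step_def psi_next_columns_def psi_next_row_def by (simp add: Let_def)

lemma psi_step_Nil: "trim cs = [] \<Longrightarrow> psi_step (cs, ps) = ([], ps)"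
  unfolding psi_step_def by (simp add: Let_def)

lemma psi_state_column_cong:
  assumes "psi_state K cs ps" "\<And>j. column_of cs j = column_of cs' j"
  shows "psi_state K cs' ps"
proof -
  have e: "column_of cs = column_of cs'" using assms(2) by (rule ext)
  show ?thesis using assms(1) unfolding psi_state_def greedy_wrt_def e .
qed

definition remaining_size :: "nat \<Rightarrow> nat set list \<Rightarrow> nat" where
  "remaining_size N cs = (\<Sum>j<N. card (column_of cs j))"

lemma (in psi_state) remaining_size_decreases:
  assumes ne: "trim cs \<noteq> []" and top: "\<And>j. N \<le> j \<Longrightarrow> K j = {}"
  shows "remaining_size N (psi_next_columns cs) < remaining_size N cs"
  unfolding remaining_size_def
proof (rule sum_strict_mono_ex1)
  show "finite {..<N}" by simp
  show "\<forall>j\<in>{..<N}. card (column_of (psi_next_columns cs) j) \<le> card (column_of cs j)"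
    using next_columns_subset[OF ne] finite_column by (meson card_mono)
  have "0 < N"
  proof (rule ccontr)
    assume "\<not> 0 < N"
    then have "column_of cs j = {}" for j using column_subset[of j] top[of j] by simp
    then show False using ne trim_eq_Nil_iff by simp
  qed
  moreover have "column_of (psi_next_columns cs) 0 \<subset> column_of cs 0"
    using step_consumes[OF ne] next_columns_subset[OF ne] by blast
  then have "card (column_of (psi_next_columns cs) 0) < card (column_of cs 0)"
    using finite_column by (rule psubset_card_mono[rotated])
  ultimately show "\<exists>j\<in>{..<N}. card (column_of (psi_next_columns cs) j) < card (column_of cs j)" by blast
qed

lemma psi_state_iterate:
  assumes "psi_state K cs0 ps0" and top: "\<And>j. N \<le> j \<Longrightarrow> K j = {}"
  defines "st m \<equiv> (psi_step ^^ m) (cs0, ps0)"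
  shows "psi_state K (fst (st m)) (snd (st m)) \<and>
    (trim (fst (st m)) = [] \<or> remaining_size N (fst (st m)) + m \<le> remaining_size N cs0)"
proof (induction m)
  case 0
  then show ?case using assms(1) unfolding st_def by simp
next
  case (Suc m)
  obtain cs ps where st: "st m = (cs, ps)" by fastforce
  then have inv: "psi_state K cs ps" and size: "trim cs = [] \<or> remaining_size N cs + m \<le> remaining_size N cs0"
    using Suc.IH by auto
  have next_st: "st (Suc m) = psi_step (cs, ps)" using st unfolding st_def by simp
  show ?case
  proof (cases "trim cs = []")
    case True
    have "psi_state K [] ps" using psi_state_column_cong[OF inv] True trim_eq_Nil_iff[of cs]
      by (simp add: column_of_def)
    then show ?thesis using next_st psi_step_Nil[OF True] by (simp add: trim_def)
  next
    case False
    then show ?thesis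
      using next_st psi_step_eq[OF False] psi_state.step[OF inv False] size
        psi_state.remaining_size_decreases[where N = N, OF inv False top] by simp
  qed
qed

lemma colV_Cons: "colV (x # V) c = (if c \<le> length x then [x ! (c - 1)] else []) @ colV V c"
proof -
  have "[0..<length (x # V)] = 0 # map Suc [0..<length V]"
    by (simp add: upt_conv_Cons map_Suc_upt del: upt_Suc)
  then show ?thesis unfolding colV_map by (simp add: comp_def filter_map)
qed

lemma sum_if_less_eq_min: "(\<Sum>j<N. (if j < L then 1 else 0 :: nat)) = min N L"
  by (induction N) auto

lemma sum_length_colV_le: "(\<Sum>j<N. length (colV V (Suc j))) \<le> sum_list (map length V)"
proof (induction V)
  case Nil
  then show ?case by (simp add: colV_def)
next
  case (Cons x V)
  have "(\<Sum>j<N. length (colV (x # V) (Suc j))) = (\<Sum>j<N. (if j < length x then 1 else 0)) + (\<Sum>j<N. length (colV V (Suc j)))"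
  proof -
    have "length (if Suc j \<le> length x then [x ! (Suc j - 1)] else []) = (if j < length x then 1 else 0)" for j
      by simp
    then show ?thesis unfolding colV_Cons by (simp add: sum.distrib)
  qed
  also have "\<dots> \<le> length x + sum_list (map length V)" using Cons.IH sum_if_less_eq_min[where N=N and L="length x"] by simp
  finally show ?case by simp
qed

context psi_state
begin

lemma key_rows_eq: "(a, A) \<in> set ps \<Longrightarrow> key_rows ps a = A"
  unfolding key_rows_def using map_of_is_SomeI[OF distinct_keys] by simp

lemma key_rows_mem: "key_rows ps i \<noteq> [] \<Longrightarrow> (i, key_rows ps i) \<in> set ps"
  unfolding key_rows_def by (cases "map_of ps i") (auto dest: map_of_SomeD)

context
  assumes used_up: "\<And>j. column_of cs j = {}" and positive: "\<And>j x. x \<in> K j \<Longrightarrow> 0 < x"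
begin

lemma key_rows_vanish: "key_rows ps i \<noteq> [] \<Longrightarrow> 1 \<le> i \<and> i \<le> Max (insert 0 (fst ` set ps))"
proof -
  assume ne: "key_rows ps i \<noteq> []"
  note mem = key_rows_mem[OF ne]
  have "key_rows ps i ! 0 \<in> K 0" using columns_cover[of 0] mem ne by blast
  moreover have "key_rows ps i ! 0 = i" using extracted_rows[OF mem] by simp
  moreover have "i \<le> Max (insert 0 (fst ` set ps))" using mem by (intro Max_ge) force+
  ultimately show ?thesis using positive by fastforce
qed

lemmas cell = incell_filling_of_rows[where rows = "key_rows ps" and R = "Max (insert 0 (fst ` set ps))", OF key_rows_vanish, folded sky_of_pairs_eq]
lemmas entry = ent_filling_of_rows[where rows = "key_rows ps" and R = "Max (insert 0 (fst ` set ps))", OF key_rows_vanish, folded sky_of_pairs_eq]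

lemma colvals_sky_of_pairs:
  assumes c: "1 \<le> c"
  shows "colvals (sky_of_pairs ps) c = K (c - 1)"
proof -
  have "{key_rows ps r ! (c - 1) | r. c \<le> length (key_rows ps r)} =
      {A ! (c - 1) | a A. (a, A) \<in> set ps \<and> c - 1 < length A}"
  proof (rule set_eqI, rule iffI)
    fix y assume "y \<in> {key_rows ps r ! (c - 1) | r. c \<le> length (key_rows ps r)}"
    then obtain r where "y = key_rows ps r ! (c - 1)" "c \<le> length (key_rows ps r)" by blast
    moreover from this have "(r, key_rows ps r) \<in> set ps" using c by (intro key_rows_mem) auto
    ultimately show "y \<in> {A ! (c - 1) | a A. (a, A) \<in> set ps \<and> c - 1 < length A}" using c by fastforce
  next
    fix y assume "y \<in> {A ! (c - 1) | a A. (a, A) \<in> set ps \<and> c - 1 < length A}"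
    then obtain a A where "y = A ! (c - 1)" "(a, A) \<in> set ps" "c - 1 < length A" by blast
    then show "y \<in> {key_rows ps r ! (c - 1) | r. c \<le> length (key_rows ps r)}"
      using c key_rows_eq by (intro CollectI exI[of _ a]) auto
  qed
  then show ?thesis
    using colvals_filling_of_rows[where rows = "key_rows ps" and R = "Max (insert 0 (fst ` set ps))", OF key_rows_vanish c, folded sky_of_pairs_eq] columns_cover[of "c - 1"] used_up
    by simp
qed

lemma sky_of_pairs_in_qKT1: "sky_of_pairs ps \<in> qKT1"
proof (rule qKT1_intro)
  let ?F = "sky_of_pairs ps"
  have rows: "key_rows ps i ! 0 = i" "sorted_wrt (\<lambda>x y. y \<le> x) (key_rows ps i)"
    if "incell ?F i c" for i c
  proof -
    have "key_rows ps i \<noteq> []" using that cell by auto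
    then show "key_rows ps i ! 0 = i" "sorted_wrt (\<lambda>x y. y \<le> x) (key_rows ps i)"
      using extracted_rows[OF key_rows_mem] by auto
  qed
  have desc: "key_rows ps i ! j \<le> key_rows ps i ! j'"
    if "incell ?F i c" "j' \<le> j" "j < length (key_rows ps i)" for i c j j'
    using rows(2)[OF that(1)] that(2,3) by (cases "j = j'") (auto simp: sorted_wrt_iff_nth_less)
  have related: "extracted_before (key_rows ps r) (key_rows ps s) \<or> extracted_before (key_rows ps s) (key_rows ps r)"
    if "incell ?F r c" "incell ?F s c'" "r < s" for r s c c'
  proof -
    have "key_rows ps r \<noteq> []" "key_rows ps s \<noteq> []" using that(1,2) cell by auto
    then show ?thesis using extracted_before_pairwise[OF key_rows_mem key_rows_mem] that(3) by simp
  qed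
  have slen: "slen ?F i = length (key_rows ps i)" for i
    using slen_filling_of_rows[where rows = "key_rows ps" and R = "Max (insert 0 (fst ` set ps))", OF key_rows_vanish, folded sky_of_pairs_eq] .
  have "Max (insert 0 (fst ` set ps)) = 0 \<or> key_rows ps (Max (insert 0 (fst ` set ps))) \<noteq> []"
  proof (cases "ps = []")
    case False
    then have "Max (insert 0 (fst ` set ps)) \<in> fst ` set ps \<or> Max (insert 0 (fst ` set ps)) = 0"
      using Max_in[of "insert 0 (fst ` set ps)"] by auto
    then show ?thesis using key_rows_eq extracted_rows by force
  qed simp
  then show "skyline_ok ?F" unfolding sky_of_pairs_eq by (rule skyline_ok_filling_of_rows)
  show "0 < ent ?F i c \<and> ent ?F i c \<le> i" if "incell ?F i c" for i c
  proof -
    have "ent ?F i c \<in> K (c - 1)"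
      using that colvals_sky_of_pairs[of c] incell_bounds[OF that] unfolding colvals_def by blast
    moreover have "ent ?F i c \<le> key_rows ps i ! 0"
    proof -
      have "c - 1 < length (key_rows ps i)" using that cell by auto
      then have "key_rows ps i ! (c - 1) \<le> key_rows ps i ! 0" using desc[OF that] by simp
      then show ?thesis using that entry by simp
    qed
    ultimately show ?thesis using positive rows(1)[OF that] by auto
  qed
  show "ent ?F i (c + 1) \<le> ent ?F i c" if "1 \<le> c" "incell ?F i (c + 1)" for i c
    using that cell entry desc[OF that(2), of "c - 1" c] by simp
  show "ent ?F i c \<noteq> ent ?F i' c" if "incell ?F i c" "incell ?F i' c" "i \<noteq> i'" for i i' c
  proof -
    have "key_rows ps i \<noteq> []" "key_rows ps i' \<noteq> []" "c - 1 < length (key_rows ps i)"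
      "c - 1 < length (key_rows ps i')" using that(1,2) cell by auto
    then show ?thesis
      using that entry extracted_distinct[OF key_rows_mem key_rows_mem, of i i' "c - 1"] by simp
  qed
  show "incell ?F r (c + 1) \<and> ent ?F s c < ent ?F r (c + 1)"
    if "r < s" "incell ?F r c" "incell ?F s c" "ent ?F s c < ent ?F r c" for r s c
  proof -
    have c: "1 \<le> c" "c - 1 < length (key_rows ps r)" "c - 1 < length (key_rows ps s)"
      using that(2,3) cell by auto
    have "key_rows ps s ! (c - 1) < key_rows ps r ! (c - 1)" using that(2-4) entry by simp
    then have "Suc (c - 1) < length (key_rows ps r) \<and> key_rows ps s ! (c - 1) < key_rows ps r ! Suc (c - 1)"
      using extracted_before_rows_continue[OF related[OF that(2,3,1)] rows(2)[OF that(2)] _ c(2,3)]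
        rows(1)[OF that(2)] rows(1)[OF that(3)] that(1) by simp
    then show ?thesis using c that(3) cell entry by simp
  qed
  show "ent ?F r c < ent ?F s (c + 1)"
    if "r < s" "slen ?F r < slen ?F s" "incell ?F r c" "incell ?F s (c + 1)" for r s c
  proof -
    have c: "1 \<le> c" "c - 1 < length (key_rows ps r)" "c + 1 \<le> length (key_rows ps s)"
      using that(3,4) cell by auto
    have "length (key_rows ps r) < length (key_rows ps s)" using that(2) slen by simp
    then have "key_rows ps r ! (c - 1) < key_rows ps s ! Suc (c - 1)"
      using extracted_before_longer_row[OF related[OF that(3,4,1)] rows(2)[OF that(3)] _ _ c(2)]
        rows(1)[OF that(3)] rows(1)[OF that(4)] that(1) by simp
    then show ?thesis using c that(3,4) entry by simp
  qed
  show "ent ?F i 1 = i" if "incell ?F i 1" for i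
    using that entry rows(1) by simp
qed

end

end

lemma psi_qKT1_colvals:
  assumes V: "V \<in> revSSYT"
  shows "psi V \<in> qKT1 \<and> (\<forall>c\<ge>1. colvals (psi V) c = colvals V c)"
proof -
  define K where "K j = colvals V (Suc j)" for j
  define cs0 where "cs0 = map (colset V) [1..<width V + 1]"
  define n where "n = sum_list (map length V)"
  define st where "st = (psi_step ^^ n) (cs0, [])"
  have top: "K j = {}" if "width V \<le> j" for j
    using revSSYT_colset_beyond_width[OF V, of "Suc j"] colset_eq_colvals[of "Suc j" V] that
    unfolding K_def by simp
  have col0: "column_of cs0 j = K j" for j
  proof (cases "j < width V")
    case True
    then show ?thesis unfolding column_of_def cs0_def K_def
      using colset_eq_colvals[of "Suc j" V] by (simp del: upt_Suc)
  qed (use top in \<open>simp add: column_of_def cs0_def\<close>)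
  have inv0: "psi_state K cs0 []"
  proof
    show "finite (column_of cs0 j)" for j using col0 finite_colvals unfolding K_def by simp
    show "dominates (column_of cs0 j) (column_of cs0 (Suc j))" for j
      using col0 basic_filling_dominates[OF revSSYT_basic_filling[OF V], of "Suc j"] unfolding K_def by simp
  qed (use col0 in auto)
  have size0: "remaining_size (width V) cs0 \<le> n"
  proof -
    have "remaining_size (width V) cs0 = (\<Sum>j<width V. card (colset V (Suc j)))"
      unfolding remaining_size_def using col0 colset_eq_colvals unfolding K_def by simp
    also have "\<dots> \<le> (\<Sum>j<width V. length (colV V (Suc j)))"
      by (rule sum_mono) (simp add: colset_def card_length)
    also have "\<dots> \<le> n" unfolding n_def by (rule sum_length_colV_le)
    finally show ?thesis .
  qed
  have inv: "psi_state K (fst st) (snd st)"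
    and size: "trim (fst st) = [] \<or> remaining_size (width V) (fst st) + n \<le> remaining_size (width V) cs0"
    using psi_state_iterate[OF inv0 top] unfolding st_def by blast+
  have "trim (fst st) = []"
  proof (rule ccontr)
    assume ne: "trim (fst st) \<noteq> []"
    then have "remaining_size (width V) (fst st) = 0" using size size0 by simp
    then have "card (column_of (fst st) j) = 0" if "j < width V" for j
      using that unfolding remaining_size_def by simp
    then have "column_of (fst st) j = {}" for j
      using psi_state.finite_column[OF inv] psi_state.column_subset[OF inv, of j] top
      by (cases "j < width V") auto
    then show False using ne trim_eq_Nil_iff by simp
  qed
  then have used_up: "column_of (fst st) j = {}" for j using trim_eq_Nil_iff by simp
  have pos: "0 < x" if "x \<in> K j" for j x
    using that revSSYT_basic_filling[OF V] unfolding K_def colvals_def basic_filling_def by auto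
  have "psi V = sky_of_pairs (snd st)" unfolding psi_def st_def cs0_def n_def by simp
  then show ?thesis
    using psi_state.sky_of_pairs_in_qKT1[OF inv used_up pos] psi_state.colvals_sky_of_pairs[OF inv used_up pos]
    unfolding K_def by simp
qed

lemma bij_betw_particle_highest:
  assumes maps: "\<And>V. V \<in> revSSYT \<Longrightarrow> f V \<in> T \<and> (\<forall>c\<ge>1. colvals (f V) c = colvals V c)"
    and inj: "\<And>F G. F \<in> T \<Longrightarrow> G \<in> T \<Longrightarrow> (\<And>c. 1 \<le> c \<Longrightarrow> colvals F c = colvals G c) \<Longrightarrow> F = G"
    and basic: "\<And>F. F \<in> T \<Longrightarrow> basic_filling F"
  shows "bij_betw f {V \<in> revSSYT. particle_highest V} {F \<in> T. particle_highest F}"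
  unfolding bij_betw_def
proof
  show "inj_on f {V \<in> revSSYT. particle_highest V}"
  proof (rule inj_onI)
    fix V W assume V: "V \<in> {V \<in> revSSYT. particle_highest V}" and W: "W \<in> {V \<in> revSSYT. particle_highest V}"
      and e: "f V = f W"
    have "colvals V c = colvals W c" if "1 \<le> c" for c
      using maps[of V] maps[of W] V W e that by auto
    then show "V = W" using revSSYT_colvals_inj V W by blast
  qed
  show "f ` {V \<in> revSSYT. particle_highest V} = {F \<in> T. particle_highest F}"
  proof
    show "f ` {V \<in> revSSYT. particle_highest V} \<subseteq> {F \<in> T. particle_highest F}"
    proof
      fix F assume "F \<in> f ` {V \<in> revSSYT. particle_highest V}"
      then obtain V where V: "V \<in> revSSYT" "particle_highest V" "F = f V" by auto
      have "particle_highest (f V) = particle_highest V" using maps[OF V(1)] by (intro particle_highest_cong) auto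
      then show "F \<in> {F \<in> T. particle_highest F}" using maps[OF V(1)] V by simp
    qed
    show "{F \<in> T. particle_highest F} \<subseteq> f ` {V \<in> revSSYT. particle_highest V}"
    proof
      fix F assume F: "F \<in> {F \<in> T. particle_highest F}"
      obtain V where V: "V \<in> revSSYT" "\<forall>c\<ge>1. colvals V c = colvals F c" using basic_filling_revSSYT_exists[OF basic] F by blast
      have "f V = F" using inj[of "f V" F] maps[OF V(1)] V F by auto
      moreover have "particle_highest V = particle_highest F" using V(2) by (intro particle_highest_cong) auto
      ultimately show "F \<in> f ` {V \<in> revSSYT. particle_highest V}" using V F by auto
    qed
  qed
qed

theorem theorem5p10:
  shows "bij_betw psi HrevSSYT HqKT1 \<and> bij_betw Gamma HrevSSYT HSSF"
  unfolding HrevSSYT_def HqKT1_def HSSF_def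
  using bij_betw_particle_highest[OF psi_qKT1_colvals qKT1_colvals_inj quasi_key.basic_filling[OF qKT1_quasi_key]]
    bij_betw_particle_highest[OF Gamma_ASSF_colvals ASSF_colvals_inj ASSF_basic_filling]
  by blast

end
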